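(* Define $\Delta:\mathcal{H}_{\mathbb{T}}\to\mathcal{H}_{\mathbb{T}}\otimes\mathcal{H}_{\mathbb{T}}$ linearly by, for $\mathcal{T}\in\mathbb{T}_n$, $$\Delta(\mathcal{T})=\sum_{O\in\mathcal{T}}\mathrm{Std}(\mathcal{T}_{\mid [n]\setminus O})\otimes \mathrm{Std}(\mathcal{T}_{\mid O}).$$ Then: (1) $(\mathcal{H}_{\mathbb{T}},.,\Delta)$ is a graded Hopf algebra; (2) $(\mathcal{H}_{\mathbb{T}},\downarrow,\Delta)$ is a graded infinitesimal bialgebra; (3) the involution $\iota$ defines a Hopf algebra isomorphism from $(\mathcal{H}_{\mathbb{T}},.,\Delta)$ to $(\mathcal{H}_{\mathbb{T}},.,\Delta^{op})$.
   Context: Let $K$ be a field. For $n\geq0$, $[n]=\{1,\ldots,n\}$, $\mathbb{T}_n$ is the set of topologies on $[n]$, and $\mathcal{H}_{\mathbb{T}}$ is the $K$-vector space with basis $\bigsqcup_{n\ge0}\mathbb{T}_n$, graded by giving elements of $\mathbb{T}_n$ degree $n$; the empty topology is denoted $1$. For $O\subseteq\mathbb{N}$, $O(+n)=\{k+n\mid k\in O\}$. Products: for $\mathcal{T}\in\mathbb{T}_n,\mathcal{T}'\in\mathbb{T}_{n'}$, $\mathcal{T}.\mathcal{T}'$ is the topology on $[n+n']$ with open sets $O\sqcup O'(+n)$ ($O\in\mathcal{T},O'\in\mathcal{T}'$), and $\mathcal{T}\downarrow\mathcal{T}'$ is the topology on $[n+n']$ with open sets $O\sqcup[n'](+n)$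 ($O\in\mathcal{T}$) and $O'(+n)$ ($O'\in\mathcal{T}'$), both extended bilinearly (associative, unit $1$). For a topology $\mathcal{T}$ on a finite set $X$ and $Y\subseteq X$, $\mathcal{T}_{\mid Y}=\{O\cap Y\mid O\in\mathcal{T}\}$. If $X$ is a totally ordered set of cardinality $m$, $\mathrm{Std}(\mathcal{T})\in\mathbb{T}_m$ is the image of $\mathcal{T}$ under the unique increasing bijection $X\to[m]$. The involution $\iota$ is defined on basis elements by $\iota(\mathcal{T})=\{X\setminus O\mid O\in\mathcal{T}\}$ and extended linearly. An infinitesimal bialgebra is a triple $(A,m,\Delta)$ where $(A,m)$ is a unital associative algebra, $(A,\Delta)$ a counital coassociative coalgebra, and $\Delta(xy)=(x\otimes1)\Delta(y)+\Delta(x)(1\otimes y)-x\otimes y$ for all $x,y$. *)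

theory Defs
  imports "HOL-Library.Poly_Mapping"
begin

definition is_topo :: "nat \<Rightarrow> nat set set \<Rightarrow> bool" where
  "is_topo n T \<longleftrightarrow> T \<subseteq> Pow {1..n} \<and> {} \<in> T \<and> {1..n} \<in> T \<and>
     (\<forall>A\<in>T. \<forall>B\<in>T. A \<union> B \<in> T \<and> A \<inter> B \<in> T)"

typedef ftop = "{(n, T). is_topo n T}"
  by (rule exI[of _ "(0, {{}})"]) (auto simp: is_topo_def)

definition deg :: "ftop \<Rightarrow> nat" where "deg t = fst (Rep_ftop t)"
definition opens :: "ftop \<Rightarrow> nat set set" where "opens t = snd (Rep_ftop t)"

definition shift :: "nat set \<Rightarrow> nat \<Rightarrow> nat set" where "shift U k = (\<lambda>x. x + k) ` U"

definition top_one :: ftop where "top_one = Abs_ftop (0, {{}})"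

definition top_dot :: "ftop \<Rightarrow> ftop \<Rightarrow> ftop" where
  "top_dot t t' = Abs_ftop (deg t + deg t',
     {U \<union> shift U' (deg t) | U U'. U \<in> opens t \<and> U' \<in> opens t'})"

definition top_down :: "ftop \<Rightarrow> ftop \<Rightarrow> ftop" where
  "top_down t t' = Abs_ftop (deg t + deg t',
     {U \<union> shift {1..deg t'} (deg t) | U. U \<in> opens t} \<union> {shift U' (deg t) | U'. U' \<in> opens t'})"

text \<open>Std of the restriction of t to Y: the increasing bijection Y -> [card Y] is x |-> card {y in Y. y <= x}.\<close>
definition std_map :: "nat set \<Rightarrow> nat \<Rightarrow> nat" where
  "std_map Y x = card {y \<in> Y. y \<le> x}"

definition std_restr :: "ftop \<Rightarrow> nat set \<Rightarrow> ftop" where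
  "std_restr t Y = Abs_ftop (card Y, {std_map Y ` (U \<inter> Y) | U. U \<in> opens t})"

definition top_iota :: "ftop \<Rightarrow> ftop" where
  "top_iota t = Abs_ftop (deg t, {{1..deg t} - U | U. U \<in> opens t})"

text \<open>The space with basis a over K is the space of finitely supported functions; the tensor product of the spaces with bases
  'a and 'b is identified with the space with basis the product of the bases.\<close>

definition smul :: "'k \<Rightarrow> ('a \<Rightarrow>\<^sub>0 'k) \<Rightarrow> ('a \<Rightarrow>\<^sub>0 'k::semiring_0)" where
  "smul c p = Poly_Mapping.map (\<lambda>x. c * x) p"

definition lin :: "('a \<Rightarrow> ('b \<Rightarrow>\<^sub>0 'k::semiring_0)) \<Rightarrow> ('a \<Rightarrow>\<^sub>0 'k) \<Rightarrow> ('b \<Rightarrow>\<^sub>0 'k)" where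
  "lin \<phi> f = (\<Sum>a\<in>Poly_Mapping.keys f. smul (Poly_Mapping.lookup f a) (\<phi> a))"

definition linfun :: "('a \<Rightarrow> 'k::semiring_0) \<Rightarrow> ('a \<Rightarrow>\<^sub>0 'k) \<Rightarrow> 'k" where
  "linfun e f = (\<Sum>a\<in>Poly_Mapping.keys f. Poly_Mapping.lookup f a * e a)"

definition bilin :: "('a \<Rightarrow> 'b \<Rightarrow> ('c \<Rightarrow>\<^sub>0 'k::semiring_0)) \<Rightarrow> ('a \<Rightarrow>\<^sub>0 'k) \<Rightarrow> ('b \<Rightarrow>\<^sub>0 'k) \<Rightarrow> ('c \<Rightarrow>\<^sub>0 'k)" where
  "bilin \<mu> f g = lin (\<lambda>a. lin (\<lambda>b. \<mu> a b) g) f"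

definition bvec :: "'a \<Rightarrow> ('a \<Rightarrow>\<^sub>0 'k::semiring_1)" where
  "bvec a = Poly_Mapping.single a 1"

definition tens :: "('a \<Rightarrow>\<^sub>0 'k::semiring_1) \<Rightarrow> ('b \<Rightarrow>\<^sub>0 'k) \<Rightarrow> ('a \<times> 'b \<Rightarrow>\<^sub>0 'k)" where
  "tens u v = bilin (\<lambda>a b. bvec (a, b)) u v"

definition tmap :: "(('a \<Rightarrow>\<^sub>0 'k::semiring_1) \<Rightarrow> ('c \<Rightarrow>\<^sub>0 'k)) \<Rightarrow> (('b \<Rightarrow>\<^sub>0 'k) \<Rightarrow> ('d \<Rightarrow>\<^sub>0 'k))
     \<Rightarrow> ('a \<times> 'b \<Rightarrow>\<^sub>0 'k) \<Rightarrow> ('c \<times> 'd \<Rightarrow>\<^sub>0 'k)" where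
  "tmap F G = lin (\<lambda>(a, b). tens (F (bvec a)) (G (bvec b)))"

definition alg_mult :: "('a \<Rightarrow> 'a \<Rightarrow> 'a) \<Rightarrow> ('a \<Rightarrow>\<^sub>0 'k::semiring_1) \<Rightarrow> ('a \<Rightarrow>\<^sub>0 'k) \<Rightarrow> ('a \<Rightarrow>\<^sub>0 'k)" where
  "alg_mult mu = bilin (\<lambda>a b. bvec (mu a b))"

definition tens_mult :: "(('a \<Rightarrow>\<^sub>0 'k::semiring_1) \<Rightarrow> ('a \<Rightarrow>\<^sub>0 'k) \<Rightarrow> ('a \<Rightarrow>\<^sub>0 'k))
     \<Rightarrow> ('a \<times> 'a \<Rightarrow>\<^sub>0 'k) \<Rightarrow> ('a \<times> 'a \<Rightarrow>\<^sub>0 'k) \<Rightarrow> ('a \<times> 'a \<Rightarrow>\<^sub>0 'k)" where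
  "tens_mult m = bilin (\<lambda>(a, b) (c, d). tens (m (bvec a) (bvec c)) (m (bvec b) (bvec d)))"

definition tflip :: "('a \<times> 'b \<Rightarrow>\<^sub>0 'k::semiring_1) \<Rightarrow> ('b \<times> 'a \<Rightarrow>\<^sub>0 'k)" where
  "tflip = lin (\<lambda>(a, b). bvec (b, a))"

definition unital_assoc :: "('a \<Rightarrow> 'a \<Rightarrow> 'a) \<Rightarrow> 'a \<Rightarrow> 'k::field itself \<Rightarrow> bool" where
  "unital_assoc mu e (_ :: 'k itself) \<longleftrightarrow>
     (\<forall>x y z :: 'a \<Rightarrow>\<^sub>0 'k. alg_mult mu (alg_mult mu x y) z = alg_mult mu x (alg_mult mu y z)) \<and>
     (\<forall>x :: 'a \<Rightarrow>\<^sub>0 'k. alg_mult mu (bvec e) x = x \<and> alg_mult mu x (bvec e) = x)"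

definition coassoc :: "('a \<Rightarrow> ('a \<times> 'a \<Rightarrow>\<^sub>0 'k::field)) \<Rightarrow> bool" where
  "coassoc delta \<longleftrightarrow> (\<forall>x a b c.
     Poly_Mapping.lookup (tmap (lin delta) id (lin delta x)) ((a, b), c) =
     Poly_Mapping.lookup (tmap id (lin delta) (lin delta x)) (a, (b, c)))"

definition is_counit :: "('a \<Rightarrow> ('a \<times> 'a \<Rightarrow>\<^sub>0 'k::field)) \<Rightarrow> ('a \<Rightarrow> 'k) \<Rightarrow> bool" where
  "is_counit delta eps \<longleftrightarrow> (\<forall>x.
     lin (\<lambda>(a, b). smul (eps a) (bvec b)) (lin delta x) = x \<and>
     lin (\<lambda>(a, b). smul (eps b) (bvec a)) (lin delta x) = x)"

definition counital_coalg :: "('a \<Rightarrow> ('a \<times> 'a \<Rightarrow>\<^sub>0 'k::field)) \<Rightarrow> bool" where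
  "counital_coalg delta \<longleftrightarrow> coassoc delta \<and> (\<exists>eps. is_counit delta eps)"

definition bialgebra :: "('a \<Rightarrow> 'a \<Rightarrow> 'a) \<Rightarrow> 'a \<Rightarrow> ('a \<Rightarrow> ('a \<times> 'a \<Rightarrow>\<^sub>0 'k::field)) \<Rightarrow> bool" where
  "bialgebra mu e delta \<longleftrightarrow> unital_assoc mu e TYPE('k) \<and> counital_coalg delta \<and>
     (\<forall>x y. lin delta (alg_mult mu x y) = tens_mult (alg_mult mu) (lin delta x) (lin delta y)) \<and>
     lin delta (bvec e) = tens (bvec e) (bvec e) \<and>
     (\<exists>eps. is_counit delta eps \<and> eps e = 1 \<and>
        (\<forall>x y. linfun eps (alg_mult mu x y) = linfun eps x * linfun eps y))"

definition hopf_algebra :: "('a \<Rightarrow> 'a \<Rightarrow> 'a) \<Rightarrow> 'a \<Rightarrow> ('a \<Rightarrow> ('a \<times> 'a \<Rightarrow>\<^sub>0 'k::field)) \<Rightarrow> bool" where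
  "hopf_algebra mu e delta \<longleftrightarrow> bialgebra mu e delta \<and>
     (\<exists>eps (S :: 'a \<Rightarrow> ('a \<Rightarrow>\<^sub>0 'k)). is_counit delta eps \<and>
        (\<forall>x. lin (\<lambda>(a, b). alg_mult mu (S a) (bvec b)) (lin delta x) = smul (linfun eps x) (bvec e) \<and>
             lin (\<lambda>(a, b). alg_mult mu (bvec a) (S b)) (lin delta x) = smul (linfun eps x) (bvec e)))"

definition graded :: "('a \<Rightarrow> nat) \<Rightarrow> ('a \<Rightarrow> 'a \<Rightarrow> 'a) \<Rightarrow> 'a \<Rightarrow> ('a \<Rightarrow> ('a \<times> 'a \<Rightarrow>\<^sub>0 'k::field)) \<Rightarrow> bool" where
  "graded dg mu e delta \<longleftrightarrow> dg e = 0 \<and> (\<forall>a b. dg (mu a b) = dg a + dg b) \<and>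
     (\<forall>a c d. (c, d) \<in> Poly_Mapping.keys (delta a) \<longrightarrow> dg c + dg d = dg a)"

definition infinitesimal_bialgebra :: "('a \<Rightarrow> 'a \<Rightarrow> 'a) \<Rightarrow> 'a \<Rightarrow> ('a \<Rightarrow> ('a \<times> 'a \<Rightarrow>\<^sub>0 'k::field)) \<Rightarrow> bool" where
  "infinitesimal_bialgebra mu e delta \<longleftrightarrow> unital_assoc mu e TYPE('k) \<and> counital_coalg delta \<and>
     (\<forall>x y. lin delta (alg_mult mu x y) =
        tens_mult (alg_mult mu) (tens x (bvec e)) (lin delta y)
        + tens_mult (alg_mult mu) (lin delta x) (tens (bvec e) y)
        - tens x y)"

definition hopf_iso :: "('a \<Rightarrow> 'a \<Rightarrow> 'a) \<Rightarrow> 'a \<Rightarrow> ('a \<Rightarrow> ('a \<times> 'a \<Rightarrow>\<^sub>0 'k::field))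
    \<Rightarrow> ('a \<Rightarrow> 'a \<Rightarrow> 'a) \<Rightarrow> 'a \<Rightarrow> ('a \<Rightarrow> ('a \<times> 'a \<Rightarrow>\<^sub>0 'k)) \<Rightarrow> ('a \<Rightarrow> ('a \<Rightarrow>\<^sub>0 'k)) \<Rightarrow> bool" where
  "hopf_iso mu e delta mu' e' delta' phi \<longleftrightarrow>
     hopf_algebra mu e delta \<and> hopf_algebra mu' e' delta' \<and> bij (lin phi) \<and>
     (\<forall>x y. lin phi (alg_mult mu x y) = alg_mult mu' (lin phi x) (lin phi y)) \<and>
     lin phi (bvec e) = bvec e' \<and>
     (\<forall>x. tmap (lin phi) (lin phi) (lin delta x) = lin delta' (lin phi x))"

definition top_delta :: "ftop \<Rightarrow> (ftop \<times> ftop \<Rightarrow>\<^sub>0 'k::field)" where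
  "top_delta t = (\<Sum>U\<in>opens t. bvec (std_restr t ({1..deg t} - U), std_restr t U))"

definition top_delta_op :: "ftop \<Rightarrow> (ftop \<times> ftop \<Rightarrow>\<^sub>0 'k::field)" where
  "top_delta_op t = tflip (top_delta t)"

end

theory Submission
  imports Defs
begin

text \<open>Both products are concatenations \<open>(U, V) \<mapsto> U \<union> (V + n)\<close> of open
  sets, the product \<open>\<down>\<close> only admitting the pairs with \<open>U = {}\<close> or \<open>V\<close> the whole space. Since
  restriction and standardisation commute with concatenation, \<open>\<Delta>\<close> is multiplicative for the
  first product, and inclusion-exclusion over the two families of pairs gives the infinitesimal
  relation for the second. Iterating \<open>\<Delta>\<close> on either side yields the same sum over flags
  \<open>O\<^sub>1 \<subseteq> O\<^sub>2\<close> of open sets, hence coassociativity. The bialgebra is graded and connected, so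
  left and right antipodes exist by recursion on the degree and agree by associativity of
  convolution. Complementation of open sets preserves the first product and exchanges the two
  tensor factors of \<open>\<Delta>\<close>, so \<open>\<iota>\<close> is an isomorphism onto the opposite coalgebra, whose antipode
  is \<open>\<iota> S \<iota>\<close>.\<close>

section \<open>Linear extension\<close>

lemma lookup_smul[simp]: "Poly_Mapping.lookup (smul c p) a = c * Poly_Mapping.lookup p a"
  unfolding smul_def by (simp add: map.rep_eq when_def)

lemma lookup_bvec: "Poly_Mapping.lookup (bvec a) b = (if a = b then 1 else 0)"
  unfolding bvec_def by (simp add: lookup_single when_def)

lemma keys_bvec[simp]: "Poly_Mapping.keys (bvec a :: _ \<Rightarrow>\<^sub>0 'k::field) = {a}"
  unfolding bvec_def by simp

lemma smul_zero_left[simp]: "smul 0 p = 0"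
  by (rule poly_mapping_eqI) simp

lemma smul_one[simp]: "smul 1 (p :: _ \<Rightarrow>\<^sub>0 'k::field) = p"
  by (rule poly_mapping_eqI) simp

lemma smul_add_left: "smul (c + d) (p :: _ \<Rightarrow>\<^sub>0 'k::field) = smul c p + smul d p"
  by (rule poly_mapping_eqI) (simp add: lookup_add algebra_simps)

lemma smul_add_right: "smul c (p + q :: _ \<Rightarrow>\<^sub>0 'k::field) = smul c p + smul c q"
  by (rule poly_mapping_eqI) (simp add: lookup_add algebra_simps)

lemma smul_smul: "smul c (smul d (p :: _ \<Rightarrow>\<^sub>0 'k::field)) = smul (c * d) p"
  by (rule poly_mapping_eqI) (simp add: algebra_simps)

lemma smul_diff_right: "smul c (p - q :: _ \<Rightarrow>\<^sub>0 'k::field) = smul c p - smul c q"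
  by (rule poly_mapping_eqI) (simp add: lookup_minus algebra_simps)

lemma smul_sum_right: "smul c (\<Sum>i\<in>I. f i :: _ \<Rightarrow>\<^sub>0 'k::field) = (\<Sum>i\<in>I. smul c (f i))"
  by (rule poly_mapping_eqI) (simp add: lookup_sum sum_distrib_left)

lemma keys_smul: "Poly_Mapping.keys (smul c (p :: _ \<Rightarrow>\<^sub>0 'k::field)) \<subseteq> Poly_Mapping.keys p"
  by (auto simp: in_keys_iff)

lemma lin_superset:
  fixes f :: "'a \<Rightarrow>\<^sub>0 'k::field"
  assumes "finite S" "Poly_Mapping.keys f \<subseteq> S"
  shows "lin \<phi> f = (\<Sum>a\<in>S. smul (Poly_Mapping.lookup f a) (\<phi> a))"
  unfolding lin_def
  by (rule sum.mono_neutral_left) (use assms in \<open>auto simp: in_keys_iff\<close>)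

lemma lin_add: "lin \<phi> (f + g :: _ \<Rightarrow>\<^sub>0 'k::field) = lin \<phi> f + lin \<phi> g"
proof -
  let ?S = "Poly_Mapping.keys f \<union> Poly_Mapping.keys g"
  have "lin \<phi> (f + g) = (\<Sum>a\<in>?S. smul (Poly_Mapping.lookup (f+g) a) (\<phi> a))"
    by (rule lin_superset) (auto dest: keys_add[THEN subsetD])
  also have "\<dots> = (\<Sum>a\<in>?S. smul (Poly_Mapping.lookup f a) (\<phi> a)) + (\<Sum>a\<in>?S. smul (Poly_Mapping.lookup g a) (\<phi> a))"
    by (simp add: lookup_add smul_add_left sum.distrib)
  also have "\<dots> = lin \<phi> f + lin \<phi> g"
    by (subst (1 2) lin_superset[of ?S]) auto
  finally show ?thesis .
qed

lemma lin_zero[simp]: "lin \<phi> (0 :: _ \<Rightarrow>\<^sub>0 'k::field) = 0"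
  unfolding lin_def by simp

lemma lin_smul: "lin \<phi> (smul c f :: _ \<Rightarrow>\<^sub>0 'k::field) = smul c (lin \<phi> f)"
proof -
  have "lin \<phi> (smul c f) = (\<Sum>a\<in>Poly_Mapping.keys f. smul (Poly_Mapping.lookup (smul c f) a) (\<phi> a))"
    by (rule lin_superset) (auto simp: keys_smul)
  then show ?thesis by (simp add: lin_def smul_sum_right smul_smul)
qed

lemma lin_sum: "lin \<phi> (\<Sum>i\<in>I. f i :: _ \<Rightarrow>\<^sub>0 'k::field) = (\<Sum>i\<in>I. lin \<phi> (f i))"
  by (induction I rule: infinite_finite_induct) (auto simp: lin_add)

lemma lin_bvec[simp]: "lin \<phi> (bvec a :: _ \<Rightarrow>\<^sub>0 'k::field) = \<phi> a"
  unfolding lin_def by (simp add: lookup_bvec)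

lemma lookup_lin: "Poly_Mapping.lookup (lin \<phi> (f :: _ \<Rightarrow>\<^sub>0 'k::field)) k =
   (\<Sum>a\<in>Poly_Mapping.keys f. Poly_Mapping.lookup f a * Poly_Mapping.lookup (\<phi> a) k)"
  unfolding lin_def by (simp add: lookup_sum)

lemma lin_lin: "lin \<psi> (lin \<phi> (f :: _ \<Rightarrow>\<^sub>0 'k::field)) = lin (\<lambda>a. lin \<psi> (\<phi> a)) f"
  by (simp only: lin_def[of \<phi> f] lin_def[of "\<lambda>a. lin \<psi> (\<phi> a)" f] lin_sum lin_smul)

lemma lin_bvec_id[simp]: "lin bvec (f :: _ \<Rightarrow>\<^sub>0 'k::field) = f"
proof (rule poly_mapping_eqI)
  fix k
  have "Poly_Mapping.lookup (lin bvec f) k = (\<Sum>a\<in>Poly_Mapping.keys f. (if a = k then Poly_Mapping.lookup f a else 0))"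
    by (simp add: lookup_lin lookup_bvec if_distrib cong: if_cong)
  also have "\<dots> = Poly_Mapping.lookup f k"
    by (simp add: in_keys_iff)
  finally show "Poly_Mapping.lookup (lin bvec f) k = Poly_Mapping.lookup f k" .
qed

lemma lin_cong: "(\<And>a. a \<in> Poly_Mapping.keys f \<Longrightarrow> \<phi> a = \<psi> a) \<Longrightarrow> lin \<phi> f = lin \<psi> f"
  unfolding lin_def by (rule sum.cong) auto

lemma lin_ext: "(\<And>a. \<phi> a = \<psi> a) \<Longrightarrow> lin \<phi> f = lin \<psi> f"
  by (rule lin_cong) auto

lemma lin_fun_add: "lin (\<lambda>a. \<phi> a + \<psi> a) (f :: _ \<Rightarrow>\<^sub>0 'k::field) = lin \<phi> f + lin \<psi> f"
  unfolding lin_def by (simp add: smul_add_right sum.distrib)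

lemma lin_fun_diff: "lin (\<lambda>a. \<phi> a - \<psi> a) (f :: _ \<Rightarrow>\<^sub>0 'k::field) = lin \<phi> f - lin \<psi> f"
  unfolding lin_def by (simp add: smul_diff_right sum_subtractf)

lemma bilin_lin_left: "bilin \<mu> (lin \<phi> x) (y :: _ \<Rightarrow>\<^sub>0 'k::field) = lin (\<lambda>a. bilin \<mu> (\<phi> a) y) x"
  unfolding bilin_def by (simp add: lin_lin)

lemma bilin_swap: "bilin \<mu> x (y :: _ \<Rightarrow>\<^sub>0 'k::field) = lin (\<lambda>b. lin (\<lambda>a. \<mu> a b) x) y"
proof -
  have "bilin \<mu> x y = (\<Sum>a\<in>Poly_Mapping.keys x. \<Sum>b\<in>Poly_Mapping.keys y.
          smul (Poly_Mapping.lookup x a * Poly_Mapping.lookup y b) (\<mu> a b))"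
    by (simp add: bilin_def lin_def smul_sum_right smul_smul)
  also have "\<dots> = (\<Sum>b\<in>Poly_Mapping.keys y. \<Sum>a\<in>Poly_Mapping.keys x.
          smul (Poly_Mapping.lookup y b * Poly_Mapping.lookup x a) (\<mu> a b))"
    by (subst sum.swap) (simp add: mult.commute)
  also have "\<dots> = lin (\<lambda>b. lin (\<lambda>a. \<mu> a b) x) y"
    by (simp add: lin_def smul_sum_right smul_smul)
  finally show ?thesis .
qed

lemma bilin_lin_right: "bilin \<mu> x (lin \<phi> (y :: _ \<Rightarrow>\<^sub>0 'k::field)) = lin (\<lambda>b. bilin \<mu> x (\<phi> b)) y"
  by (simp add: bilin_swap[of \<mu> x] lin_lin)

lemma bilin_bvec[simp]: "bilin \<mu> (bvec a) (bvec b :: _ \<Rightarrow>\<^sub>0 'k::field) = \<mu> a b"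
  unfolding bilin_def by simp

lemma bilin_bvec_left: "bilin \<mu> (bvec a) (y :: _ \<Rightarrow>\<^sub>0 'k::field) = lin (\<mu> a) y"
  unfolding bilin_def by simp

lemma bilin_bvec_right: "bilin \<mu> x (bvec b :: _ \<Rightarrow>\<^sub>0 'k::field) = lin (\<lambda>a. \<mu> a b) x"
  unfolding bilin_def by simp

lemma bilin_sum_left: "bilin \<mu> (\<Sum>i\<in>I. x i) (y :: _ \<Rightarrow>\<^sub>0 'k::field) = (\<Sum>i\<in>I. bilin \<mu> (x i) y)"
  unfolding bilin_def by (simp add: lin_sum)

lemma bilin_sum_right: "bilin \<mu> x (\<Sum>i\<in>I. y i :: _ \<Rightarrow>\<^sub>0 'k::field) = (\<Sum>i\<in>I. bilin \<mu> x (y i))"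
  unfolding bilin_swap[of \<mu> x] by (simp add: lin_sum)

lemma bilin_smul_left: "bilin \<mu> (smul c x) (y :: _ \<Rightarrow>\<^sub>0 'k::field) = smul c (bilin \<mu> x y)"
  unfolding bilin_def by (simp add: lin_smul)

lemma bilin_smul_right: "bilin \<mu> x (smul c y :: _ \<Rightarrow>\<^sub>0 'k::field) = smul c (bilin \<mu> x y)"
  unfolding bilin_swap[of \<mu> x] by (simp add: lin_smul)

lemma linfun_superset:
  fixes f :: "'a \<Rightarrow>\<^sub>0 'k::field"
  assumes "finite S" "Poly_Mapping.keys f \<subseteq> S"
  shows "linfun e f = (\<Sum>a\<in>S. Poly_Mapping.lookup f a * e a)"
  unfolding linfun_def
  by (rule sum.mono_neutral_left) (use assms in \<open>auto simp: in_keys_iff\<close>)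

lemma linfun_add: "linfun e (f + g :: _ \<Rightarrow>\<^sub>0 'k::field) = linfun e f + linfun e g"
proof -
  let ?S = "Poly_Mapping.keys f \<union> Poly_Mapping.keys g"
  have "linfun e (f + g) = (\<Sum>a\<in>?S. Poly_Mapping.lookup (f+g) a * e a)"
    by (rule linfun_superset) (auto dest: keys_add[THEN subsetD])
  also have "\<dots> = (\<Sum>a\<in>?S. Poly_Mapping.lookup f a * e a) + (\<Sum>a\<in>?S. Poly_Mapping.lookup g a * e a)"
    by (simp add: lookup_add algebra_simps sum.distrib)
  also have "\<dots> = linfun e f + linfun e g"
    by (subst (1 2) linfun_superset[of ?S]) auto
  finally show ?thesis .
qed

lemma linfun_zero[simp]: "linfun e (0 :: _ \<Rightarrow>\<^sub>0 'k::field) = 0"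
  unfolding linfun_def by simp

lemma linfun_smul: "linfun e (smul c f :: _ \<Rightarrow>\<^sub>0 'k::field) = c * linfun e f"
proof -
  have "linfun e (smul c f) = (\<Sum>a\<in>Poly_Mapping.keys f. Poly_Mapping.lookup (smul c f) a * e a)"
    by (rule linfun_superset) (auto simp: keys_smul)
  then show ?thesis by (simp add: linfun_def sum_distrib_left mult.assoc)
qed

lemma linfun_sum: "linfun e (\<Sum>i\<in>I. f i :: _ \<Rightarrow>\<^sub>0 'k::field) = (\<Sum>i\<in>I. linfun e (f i))"
  by (induction I rule: infinite_finite_induct) (auto simp: linfun_add)

lemma linfun_bvec[simp]: "linfun e (bvec a :: _ \<Rightarrow>\<^sub>0 'k::field) = e a"
  unfolding linfun_def by (simp add: lookup_bvec)

lemma linfun_lin: "linfun e (lin \<phi> (f :: _ \<Rightarrow>\<^sub>0 'k::field)) = linfun (\<lambda>a. linfun e (\<phi> a)) f"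
  by (simp only: lin_def[of \<phi> f] linfun_def[of "\<lambda>a. linfun e (\<phi> a)" f] linfun_sum linfun_smul)

lemma linfun_fun_mult: "linfun (\<lambda>a. e a * c) (f :: _ \<Rightarrow>\<^sub>0 'k::field) = linfun e f * c"
  unfolding linfun_def by (simp add: sum_distrib_right mult.assoc)

lemma smul_linfun: "smul (linfun e x) v = lin (\<lambda>a. smul (e a) (v :: _ \<Rightarrow>\<^sub>0 'k::field)) x"
proof (rule poly_mapping_eqI)
  fix k show "Poly_Mapping.lookup (smul (linfun e x) v) k = Poly_Mapping.lookup (lin (\<lambda>a. smul (e a) v) x) k"
    by (simp add: lookup_lin linfun_def sum_distrib_right mult.assoc)
qed

lemma lin_bilin: "lin \<psi> (bilin \<mu> x (y :: _ \<Rightarrow>\<^sub>0 'k::field)) = bilin (\<lambda>a b. lin \<psi> (\<mu> a b)) x y"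
  unfolding bilin_def by (simp add: lin_lin)

lemma bilin_lin_lin: "bilin \<mu> (lin \<phi> x) (lin \<psi> (y :: _ \<Rightarrow>\<^sub>0 'k::field)) = bilin (\<lambda>a b. bilin \<mu> (\<phi> a) (\<psi> b)) x y"
proof -
  have "bilin \<mu> (lin \<phi> x) (lin \<psi> y) = lin (\<lambda>a. bilin \<mu> (\<phi> a) (lin \<psi> y)) x" by (rule bilin_lin_left)
  also have "\<dots> = lin (\<lambda>a. lin (\<lambda>b. bilin \<mu> (\<phi> a) (\<psi> b)) y) x" by (simp only: bilin_lin_right)
  also have "\<dots> = bilin (\<lambda>a b. bilin \<mu> (\<phi> a) (\<psi> b)) x y" by (simp only: bilin_def)
  finally show ?thesis .
qed

lemma bilin_cong: "(\<And>a b. \<mu> a b = \<nu> a b) \<Longrightarrow> bilin \<mu> x y = bilin \<nu> x y"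
  unfolding bilin_def by (intro lin_ext) blast

lemma bilin_fun_add: "bilin (\<lambda>a b. \<mu> a b + \<nu> a b) x (y :: _ \<Rightarrow>\<^sub>0 'k::field) = bilin \<mu> x y + bilin \<nu> x y"
  unfolding bilin_def by (simp add: lin_fun_add)

lemma bilin_fun_diff: "bilin (\<lambda>a b. \<mu> a b - \<nu> a b) x (y :: _ \<Rightarrow>\<^sub>0 'k::field) = bilin \<mu> x y - bilin \<nu> x y"
  unfolding bilin_def by (simp add: lin_fun_diff)

lemma linfun_bilin: "linfun e (bilin \<mu> x (y :: _ \<Rightarrow>\<^sub>0 'k::field)) = linfun (\<lambda>a. linfun (\<lambda>b. linfun e (\<mu> a b)) y) x"
  unfolding bilin_def by (simp add: linfun_lin)

lemma alg_bvec[simp]: "alg_mult mu (bvec a) (bvec b :: _ \<Rightarrow>\<^sub>0 'k::field) = bvec (mu a b)"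
  unfolding alg_mult_def by simp

lemma tens_bvec[simp]: "tens (bvec a) (bvec b :: _ \<Rightarrow>\<^sub>0 'k::field) = bvec (a, b)"
  unfolding tens_def by simp

lemma tens_mult_bvec[simp]: "tens_mult m (bvec (a, b)) (bvec (c, d) :: _ \<Rightarrow>\<^sub>0 'k::field) = tens (m (bvec a) (bvec c)) (m (bvec b) (bvec d))"
  unfolding tens_mult_def by simp

lemma tmap_lin: "tmap F G (lin \<phi> (x :: _ \<Rightarrow>\<^sub>0 'k::field)) = lin (\<lambda>t. tmap F G (\<phi> t)) x"
  unfolding tmap_def by (simp add: lin_lin)

lemma tens_sum_left: "tens (\<Sum>i\<in>I. u i) (v :: _ \<Rightarrow>\<^sub>0 'k::field) = (\<Sum>i\<in>I. tens (u i) v)"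
  unfolding tens_def by (simp add: bilin_sum_left)

lemma tens_sum_right: "tens u (\<Sum>i\<in>I. v i :: _ \<Rightarrow>\<^sub>0 'k::field) = (\<Sum>i\<in>I. tens u (v i))"
  unfolding tens_def by (simp add: bilin_sum_right)

lemma tens_mult_sum_left: "tens_mult m (\<Sum>i\<in>I. u i) (v :: _ \<Rightarrow>\<^sub>0 'k::field) = (\<Sum>i\<in>I. tens_mult m (u i) v)"
  unfolding tens_mult_def by (simp add: bilin_sum_left)

lemma tens_mult_sum_right: "tens_mult m u (\<Sum>i\<in>I. v i :: _ \<Rightarrow>\<^sub>0 'k::field) = (\<Sum>i\<in>I. tens_mult m u (v i))"
  unfolding tens_mult_def by (simp add: bilin_sum_right)

lemma alg_mult_sum_left: "alg_mult mu (\<Sum>i\<in>I. x i) (y :: _ \<Rightarrow>\<^sub>0 'k::field) = (\<Sum>i\<in>I. alg_mult mu (x i) y)"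
  unfolding alg_mult_def by (rule bilin_sum_left)

lemma alg_mult_sum_right: "alg_mult mu x (\<Sum>i\<in>I. y i :: _ \<Rightarrow>\<^sub>0 'k::field) = (\<Sum>i\<in>I. alg_mult mu x (y i))"
  unfolding alg_mult_def by (rule bilin_sum_right)

lemma alg_mult_smul_left: "alg_mult mu (smul c x) (y :: _ \<Rightarrow>\<^sub>0 'k::field) = smul c (alg_mult mu x y)"
  unfolding alg_mult_def by (rule bilin_smul_left)

lemma alg_mult_smul_right: "alg_mult mu x (smul c y :: _ \<Rightarrow>\<^sub>0 'k::field) = smul c (alg_mult mu x y)"
  unfolding alg_mult_def by (rule bilin_smul_right)

lemma lin_alg_mult: "lin \<psi> (alg_mult mu x (y :: _ \<Rightarrow>\<^sub>0 'k::field)) = bilin (\<lambda>a b. \<psi> (mu a b)) x y"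
  unfolding alg_mult_def by (simp add: lin_bilin)

lemma tens_mult_lin: "tens_mult m (lin \<phi> x) (lin \<psi> (y :: _ \<Rightarrow>\<^sub>0 'k::field)) = bilin (\<lambda>a b. tens_mult m (\<phi> a) (\<psi> b)) x y"
  unfolding tens_mult_def by (rule bilin_lin_lin)

lemma unital_assocI:
  assumes "\<And>a b c. mu (mu a b) c = mu a (mu b c)" "\<And>a. mu e a = a" "\<And>a. mu a e = a"
  shows "unital_assoc mu e TYPE('k::field)"
  unfolding unital_assoc_def alg_mult_def bilin_def by (simp add: lin_lin assms)

lemma coassocI:
  fixes delta :: "'a \<Rightarrow> ('a \<times> 'a \<Rightarrow>\<^sub>0 'k::field)"
  assumes "\<And>t a b c. Poly_Mapping.lookup (tmap (lin delta) id (delta t)) ((a, b), c) =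
                      Poly_Mapping.lookup (tmap id (lin delta) (delta t)) (a, (b, c))"
  shows "coassoc delta"
  unfolding coassoc_def by (simp add: tmap_lin lookup_lin assms)

lemma linfun_alg_mult:
  assumes "\<And>a b. eps (mu a b) = eps a * eps b"
  shows "linfun eps (alg_mult mu x y) = linfun eps x * linfun eps (y :: _ \<Rightarrow>\<^sub>0 'k::field)"
proof -
  have "linfun eps (alg_mult mu x y) = linfun (\<lambda>a. linfun (\<lambda>b. eps a * eps b) y) x"
    unfolding alg_mult_def linfun_bilin by (simp add: assms)
  also have "\<dots> = linfun (\<lambda>a. eps a * linfun eps y) x"
    using linfun_fun_mult[of eps _ y] by (simp add: mult.commute)
  also have "\<dots> = linfun eps x * linfun eps y" by (rule linfun_fun_mult)
  finally show ?thesis .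
qed

lemma bialgebraI:
  fixes delta :: "'a \<Rightarrow> ('a \<times> 'a \<Rightarrow>\<^sub>0 'k::field)"
  assumes "unital_assoc mu e TYPE('k)" and "coassoc delta" and "is_counit delta eps"
    and "eps e = 1" and "\<And>a b. eps (mu a b) = eps a * eps b"
    and mult: "\<And>a b. delta (mu a b) = tens_mult (alg_mult mu) (delta a) (delta b)"
    and "delta e = bvec (e, e)"
  shows "bialgebra mu e delta"
  unfolding bialgebra_def counital_coalg_def
proof (intro conjI allI exI)
  fix x y :: "'a \<Rightarrow>\<^sub>0 'k"
  show "lin delta (alg_mult mu x y) = tens_mult (alg_mult mu) (lin delta x) (lin delta y)"
    unfolding lin_alg_mult tens_mult_lin by (rule bilin_cong) (rule mult)
  show "linfun eps (alg_mult mu x y) = linfun eps x * linfun eps y"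
    by (rule linfun_alg_mult) fact
qed (use assms in simp_all)

lemma hopf_algebraI:
  fixes delta :: "'a \<Rightarrow> ('a \<times> 'a \<Rightarrow>\<^sub>0 'k::field)" and S :: "'a \<Rightarrow> ('a \<Rightarrow>\<^sub>0 'k)"
  assumes "bialgebra mu e delta" and "is_counit delta eps"
    and left: "\<And>t. lin (\<lambda>(a, b). alg_mult mu (S a) (bvec b)) (delta t) = smul (eps t) (bvec e)"
    and right: "\<And>t. lin (\<lambda>(a, b). alg_mult mu (bvec a) (S b)) (delta t) = smul (eps t) (bvec e)"
  shows "hopf_algebra mu e delta"
  unfolding hopf_algebra_def
proof (intro conjI exI allI)
  fix x :: "'a \<Rightarrow>\<^sub>0 'k"
  show "lin (\<lambda>(a, b). alg_mult mu (S a) (bvec b)) (lin delta x) = smul (linfun eps x) (bvec e)"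
    unfolding lin_lin smul_linfun by (rule lin_ext) (rule left)
  show "lin (\<lambda>(a, b). alg_mult mu (bvec a) (S b)) (lin delta x) = smul (linfun eps x) (bvec e)"
    unfolding lin_lin smul_linfun by (rule lin_ext) (rule right)
qed (use assms in simp_all)

lemma infinitesimal_bialgebraI:
  fixes delta :: "'a \<Rightarrow> ('a \<times> 'a \<Rightarrow>\<^sub>0 'k::field)"
  assumes "unital_assoc mu e TYPE('k)" and "counital_coalg delta"
    and leibniz: "\<And>a b. delta (mu a b) = tens_mult (alg_mult mu) (bvec (a, e)) (delta b)
                     + tens_mult (alg_mult mu) (delta a) (bvec (e, b)) - bvec (a, b)"
  shows "infinitesimal_bialgebra mu e delta"
  unfolding infinitesimal_bialgebra_def
proof (intro conjI allI)
  fix x y :: "'a \<Rightarrow>\<^sub>0 'k"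
  have tens_unit: "tens x (bvec e) = lin (\<lambda>a. bvec (a, e)) x" "tens (bvec e) y = lin (\<lambda>b. bvec (e, b)) y"
    unfolding tens_def by (simp_all add: bilin_bvec_left bilin_bvec_right)
  show "lin delta (alg_mult mu x y) = tens_mult (alg_mult mu) (tens x (bvec e)) (lin delta y)
      + tens_mult (alg_mult mu) (lin delta x) (tens (bvec e) y) - tens x y"
    unfolding lin_alg_mult tens_unit tens_mult_lin
    unfolding tens_def bilin_fun_add[symmetric] bilin_fun_diff[symmetric]
    by (rule bilin_cong) (simp add: leibniz)
qed (use assms in simp_all)

lemma lin_bvec_alg_mult:
  assumes "\<And>a b. f (mu a b) = mu' (f a) (f b)"
  shows "lin (\<lambda>a. bvec (f a)) (alg_mult mu x y) =
    alg_mult mu' (lin (\<lambda>a. bvec (f a)) x) (lin (\<lambda>a. bvec (f a)) (y :: _ \<Rightarrow>\<^sub>0 'k::field))"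
proof -
  have "lin (\<lambda>a. bvec (f a)) (alg_mult mu x y) = bilin (\<lambda>a b. bvec (f (mu a b))) x y"
    by (rule lin_alg_mult)
  also have "\<dots> = bilin (\<lambda>a b. alg_mult mu' (bvec (f a)) (bvec (f b))) x y"
    by (rule bilin_cong) (simp add: assms)
  finally show ?thesis unfolding alg_mult_def[of mu'] bilin_lin_lin .
qed

lemma hopf_isoI:
  fixes delta delta' :: "'a \<Rightarrow> ('a \<times> 'a \<Rightarrow>\<^sub>0 'k::field)"
  assumes "hopf_algebra mu e delta" and "hopf_algebra mu' e' delta'"
    and invol: "\<And>a. f (f a) = a"
    and mult: "\<And>a b. f (mu a b) = mu' (f a) (f b)" and "f e = e'"
    and comult: "\<And>t. tmap (lin (\<lambda>a. bvec (f a))) (lin (\<lambda>a. bvec (f a))) (delta t) = delta' (f t)"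
  shows "hopf_iso mu e delta mu' e' delta' (\<lambda>a. bvec (f a))"
  unfolding hopf_iso_def
proof (intro conjI allI)
  let ?F = "lin (\<lambda>a. bvec (f a)) :: ('a \<Rightarrow>\<^sub>0 'k) \<Rightarrow> _"
  show "bij ?F"
    by (rule o_bij[of ?F]) (auto simp: fun_eq_iff lin_lin invol)
  fix x y :: "'a \<Rightarrow>\<^sub>0 'k"
  show "?F (alg_mult mu x y) = alg_mult mu' (?F x) (?F y)"
    by (rule lin_bvec_alg_mult) (rule mult)
  show "tmap ?F ?F (lin delta x) = lin delta' (?F x)"
    by (simp add: tmap_lin lin_lin comult)
qed (use assms in simp_all)

lemma is_topo_opens: "is_topo (deg t) (opens t)"
proof -
  have "Rep_ftop t \<in> {(n, T). is_topo n T}" by (rule Rep_ftop)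
  then show ?thesis unfolding deg_def opens_def by (simp add: case_prod_beta)
qed

lemma deg_opens_Abs_ftop:
  assumes "is_topo n T" shows "deg (Abs_ftop (n, T)) = n" "opens (Abs_ftop (n, T)) = T"
  using Abs_ftop_inverse[of "(n,T)"] assms unfolding deg_def opens_def by auto

lemma ftop_eqI: "deg t = deg s \<Longrightarrow> opens t = opens s \<Longrightarrow> t = s"
  using Rep_ftop_inject[of t s] unfolding deg_def opens_def by (simp add: prod_eq_iff)

lemma opens_subset: "U \<in> opens t \<Longrightarrow> U \<subseteq> {1..deg t}"
  using is_topo_opens[of t] unfolding is_topo_def by auto

lemma opens_empty[simp]: "{} \<in> opens t"
  using is_topo_opens[of t] unfolding is_topo_def by auto

lemma opens_full[simp]: "{1..deg t} \<in> opens t"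
  using is_topo_opens[of t] unfolding is_topo_def by auto

lemma opens_full_Suc[simp]: "{Suc 0..deg t} \<in> opens t"
  using opens_full[of t] by simp

lemma opens_Un: "U \<in> opens t \<Longrightarrow> V \<in> opens t \<Longrightarrow> U \<union> V \<in> opens t"
  using is_topo_opens[of t] unfolding is_topo_def by auto

lemma opens_Int: "U \<in> opens t \<Longrightarrow> V \<in> opens t \<Longrightarrow> U \<inter> V \<in> opens t"
  using is_topo_opens[of t] unfolding is_topo_def by auto

lemma finite_opens[simp]: "finite (opens t)"
proof -
  have "opens t \<subseteq> Pow {1..deg t}" using opens_subset by auto
  then show ?thesis by (rule finite_subset) simp
qed

lemma finite_open: "U \<in> opens t \<Longrightarrow> finite U"
  using opens_subset finite_subset by blast

lemma is_topo_one: "is_topo 0 {{}}" by (auto simp: is_topo_def)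

lemma deg_top_one[simp]: "deg top_one = 0" and opens_top_one[simp]: "opens top_one = {{}}"
  using deg_opens_Abs_ftop[OF is_topo_one] unfolding top_one_def by auto

lemma deg_eq_0_imp_top_one: "deg t = 0 \<Longrightarrow> t = top_one"
  by (rule ftop_eqI) (use opens_subset[of _ t] opens_empty[of t] in auto)

section \<open>Standardisation\<close>

lemma std_map_strict_mono:
  assumes "finite Y" "x \<in> Y" "y \<in> Y" "x < y"
  shows "std_map Y x < std_map Y y"
  unfolding std_map_def
proof (rule psubset_card_mono)
  show "finite {z \<in> Y. z \<le> y}" using assms by auto
  have "y \<in> {z \<in> Y. z \<le> y}" "y \<notin> {z \<in> Y. z \<le> x}" using assms by auto
  moreover have "{z \<in> Y. z \<le> x} \<subseteq> {z \<in> Y. z \<le> y}" using assms by auto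
  ultimately show "{z \<in> Y. z \<le> x} \<subset> {z \<in> Y. z \<le> y}" by (intro psubsetI) auto
qed

lemma std_map_le_iff:
  assumes "finite Y" "x \<in> Y" "y \<in> Y"
  shows "std_map Y x \<le> std_map Y y \<longleftrightarrow> x \<le> y"
  using std_map_strict_mono[OF assms(1,2,3)] std_map_strict_mono[OF assms(1,3,2)]
  by (metis linorder_not_le nat_less_le)

lemma inj_on_std_map: "finite Y \<Longrightarrow> inj_on (std_map Y) Y"
  unfolding inj_on_def using std_map_le_iff by (metis order_antisym order_refl)

lemma std_map_pos: "finite Y \<Longrightarrow> x \<in> Y \<Longrightarrow> 1 \<le> std_map Y x"
  unfolding std_map_def by (simp add: Suc_le_eq card_gt_0_iff) blast

lemma std_map_le_card: "finite Y \<Longrightarrow> std_map Y x \<le> card Y"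
  unfolding std_map_def by (rule card_mono) auto

lemma std_map_image: assumes "finite Y" shows "std_map Y ` Y = {1..card Y}"
proof (rule card_subset_eq)
  show "std_map Y ` Y \<subseteq> {1..card Y}" using std_map_pos std_map_le_card assms by auto
  show "card (std_map Y ` Y) = card {1..card Y}" using card_image[OF inj_on_std_map[OF assms]] by simp
qed simp

lemma std_map_image_Diff:
  assumes "finite Y" "A \<subseteq> Y"
  shows "{1..card Y} - std_map Y ` A = std_map Y ` (Y - A)"
proof -
  have "std_map Y ` (Y - A) = std_map Y ` Y - std_map Y ` A"
    by (rule inj_on_image_set_diff[OF inj_on_std_map[OF assms(1)]]) (use assms in auto)
  then show ?thesis using std_map_image[OF assms(1)] by simp
qed

lemma std_map_std_map:
  assumes "finite Y" "Z \<subseteq> Y" "x \<in> Z"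
  shows "std_map (std_map Y ` Z) (std_map Y x) = std_map Z x"
proof -
  have "{w \<in> std_map Y ` Z. w \<le> std_map Y x} = std_map Y ` {z \<in> Z. z \<le> x}"
  proof (rule set_eqI, rule iffI)
    fix w assume "w \<in> {w \<in> std_map Y ` Z. w \<le> std_map Y x}"
    then obtain z where "z \<in> Z" "w = std_map Y z" "std_map Y z \<le> std_map Y x" by auto
    then show "w \<in> std_map Y ` {z \<in> Z. z \<le> x}" using assms std_map_le_iff[OF assms(1), of z x] by auto
  next
    fix w assume "w \<in> std_map Y ` {z \<in> Z. z \<le> x}"
    then obtain z where "z \<in> Z" "w = std_map Y z" "z \<le> x" by auto
    then show "w \<in> {w \<in> std_map Y ` Z. w \<le> std_map Y x}" using assms std_map_le_iff[OF assms(1), of z x] by auto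
  qed
  moreover have "inj_on (std_map Y) {z \<in> Z. z \<le> x}"
    using inj_on_std_map[OF assms(1)] by (rule inj_on_subset) (use assms(2) in auto)
  ultimately show ?thesis unfolding std_map_def by (simp add: card_image)
qed

lemma std_map_image_std_map:
  assumes "finite Y" "Z \<subseteq> Y" "A \<subseteq> Z"
  shows "std_map (std_map Y ` Z) ` std_map Y ` A = std_map Z ` A"
  using std_map_std_map[OF assms(1,2)] assms(3) by (auto simp: image_iff) (metis subsetD)+

lemma std_map_interval: "x \<in> {1..n} \<Longrightarrow> std_map {1..n} x = x"
proof -
  assume "x \<in> {1..n}"
  then have "{y \<in> {1..n}. y \<le> x} = {1..x}" by auto
  then show ?thesis unfolding std_map_def by simp
qed

lemma inj_on_image_Int_restrict:
  assumes "inj_on f Y"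
  shows "f ` (U \<inter> Y) \<inter> f ` (V \<inter> Y) = f ` ((U \<inter> V) \<inter> Y)"
proof -
  have "f ` ((U \<inter> Y) \<inter> (V \<inter> Y)) = f ` (U \<inter> Y) \<inter> f ` (V \<inter> Y)"
    by (rule inj_on_image_Int[OF assms]) auto
  moreover have "(U \<inter> Y) \<inter> (V \<inter> Y) = (U \<inter> V) \<inter> Y" by auto
  ultimately show ?thesis by simp
qed

lemma is_topo_std_restr:
  assumes "Y \<subseteq> {1..deg t}"
  shows "is_topo (card Y) {std_map Y ` (U \<inter> Y) | U. U \<in> opens t}"
proof -
  have fY: "finite Y" using assms finite_subset by auto
  note inj = inj_on_std_map[OF fY] and rng = std_map_image[OF fY]
  show ?thesis unfolding is_topo_def
  proof (intro conjI ballI)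
    show "{std_map Y ` (U \<inter> Y) |U. U \<in> opens t} \<subseteq> Pow {1..card Y}"
      using rng by auto
    show "{} \<in> {std_map Y ` (U \<inter> Y) |U. U \<in> opens t}" by (auto intro: exI[of _ "{}"])
    have "std_map Y ` ({1..deg t} \<inter> Y) = {1..card Y}" using assms rng by (simp add: Int_absorb1)
    then show "{1..card Y} \<in> {std_map Y ` (U \<inter> Y) |U. U \<in> opens t}"
      using opens_full[of t] by blast
  next
    fix A B assume "A \<in> {std_map Y ` (U \<inter> Y) |U. U \<in> opens t}" "B \<in> {std_map Y ` (U \<inter> Y) |U. U \<in> opens t}"
    then obtain U V where UV: "U \<in> opens t" "V \<in> opens t" "A = std_map Y ` (U \<inter> Y)" "B = std_map Y ` (V \<inter> Y)" by auto
    have "A \<union> B = std_map Y ` ((U \<union> V) \<inter> Y)" using UV by auto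
    then show "A \<union> B \<in> {std_map Y ` (U \<inter> Y) |U. U \<in> opens t}" using opens_Un[OF UV(1,2)] by blast
    have "A \<inter> B = std_map Y ` ((U \<inter> V) \<inter> Y)" using UV inj_on_image_Int_restrict[OF inj] by simp
    then show "A \<inter> B \<in> {std_map Y ` (U \<inter> Y) |U. U \<in> opens t}" using opens_Int[OF UV(1,2)] by blast
  qed
qed

lemma deg_std_restr: "Y \<subseteq> {1..deg t} \<Longrightarrow> deg (std_restr t Y) = card Y"
  and opens_std_restr: "Y \<subseteq> {1..deg t} \<Longrightarrow> opens (std_restr t Y) = {std_map Y ` (U \<inter> Y) | U. U \<in> opens t}"
  using deg_opens_Abs_ftop[OF is_topo_std_restr] unfolding std_restr_def by auto

lemma opens_std_restr_image:
  "Y \<subseteq> {1..deg t} \<Longrightarrow> opens (std_restr t Y) = (\<lambda>U. std_map Y ` (U \<inter> Y)) ` opens t"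
  by (simp add: opens_std_restr Setcompr_eq_image)

abbreviation std_compl :: "ftop \<Rightarrow> nat set \<Rightarrow> ftop" where
  "std_compl t U \<equiv> std_restr t ({1..deg t} - U)"

lemma std_restr_full[simp]: "std_restr t {1..deg t} = t"
proof (rule ftop_eqI)
  show "deg (std_restr t {1..deg t}) = deg t" by (simp add: deg_std_restr)
  have "\<And>U. U \<in> opens t \<Longrightarrow> std_map {1..deg t} ` (U \<inter> {1..deg t}) = U"
  proof -
    fix U assume "U \<in> opens t"
    then have "U \<inter> {1..deg t} = U" using opens_subset by auto
    moreover have "std_map {1..deg t} ` U = U" using \<open>U \<in> opens t\<close> opens_subset[of U t] std_map_interval
      by (subst image_cong[OF refl, of _ _ id]) auto
    ultimately show "std_map {1..deg t} ` (U \<inter> {1..deg t}) = U" by simp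
  qed
  then show "opens (std_restr t {1..deg t}) = opens t" by (auto simp: opens_std_restr)
qed

lemma std_restr_full_Suc[simp]: "std_restr t {Suc 0..deg t} = t"
  using std_restr_full[of t] by simp

lemma std_restr_empty[simp]: "std_restr t {} = top_one"
  by (rule ftop_eqI) (auto simp: deg_std_restr opens_std_restr intro: opens_empty)

lemma std_restr_std_restr:
  assumes "Y \<subseteq> {1..deg t}" "Z \<subseteq> Y"
  shows "std_restr (std_restr t Y) (std_map Y ` Z) = std_restr t Z"
proof -
  have fY: "finite Y" using assms finite_subset by auto
  note inj = inj_on_std_map[OF fY] and rng = std_map_image[OF fY]
  have sub: "std_map Y ` Z \<subseteq> {1..deg (std_restr t Y)}"
    using assms rng by (auto simp: deg_std_restr)
  have Zs: "Z \<subseteq> {1..deg t}" using assms by auto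
  have trace: "\<And>U. std_map (std_map Y ` Z) ` (std_map Y ` (U \<inter> Y) \<inter> std_map Y ` Z) = std_map Z ` (U \<inter> Z)"
  proof -
    fix U
    have "std_map Y ` Z = std_map Y ` (Z \<inter> Y)" using assms by (simp add: Int_absorb2)
    then have "std_map Y ` (U \<inter> Y) \<inter> std_map Y ` Z = std_map Y ` ((U \<inter> Z) \<inter> Y)"
      using inj_on_image_Int_restrict[OF inj, of U Z] by simp
    also have "\<dots> = std_map Y ` (U \<inter> Z)" using assms by (metis Int_absorb2 Int_assoc)
    finally show "?thesis U" using std_map_image_std_map[OF fY assms(2), of "U \<inter> Z"] by auto
  qed
  show ?thesis
  proof (rule ftop_eqI)
    show "deg (std_restr (std_restr t Y) (std_map Y ` Z)) = deg (std_restr t Z)"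
      using sub Zs assms by (simp add: deg_std_restr card_image inj_on_subset[OF inj])
    have "opens (std_restr (std_restr t Y) (std_map Y ` Z)) =
          {std_map (std_map Y ` Z) ` (V \<inter> std_map Y ` Z) | V. V \<in> opens (std_restr t Y)}"
      using sub by (simp add: opens_std_restr)
    also have "\<dots> = {std_map (std_map Y ` Z) ` (std_map Y ` (U \<inter> Y) \<inter> std_map Y ` Z) | U. U \<in> opens t}"
      using assms(1) by (auto simp: opens_std_restr)
    also have "\<dots> = opens (std_restr t Z)"
      using Zs by (simp add: opens_std_restr trace)
    finally show "opens (std_restr (std_restr t Y) (std_map Y ` Z)) = opens (std_restr t Z)" .
  qed
qed

lemma shift_subset_interval: "Y' \<subseteq> {1..m} \<Longrightarrow> shift Y' n \<subseteq> {n+1..n+m}"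
  unfolding shift_def by auto

lemma mem_shift: "x \<in> shift A n \<longleftrightarrow> (\<exists>y\<in>A. x = y + n)"
  unfolding shift_def by auto

lemma shift_gt: "V \<subseteq> {1..m} \<Longrightarrow> x \<in> shift V n \<Longrightarrow> n < x"
  by (auto simp: mem_shift)

lemma card_shift: "card (shift A n) = card A"
  unfolding shift_def by (rule card_image) (simp add: inj_on_def)

lemma finite_shift[simp]: "finite (shift A n) \<longleftrightarrow> finite A"
  unfolding shift_def by (simp add: finite_image_iff inj_on_def)

lemma shift_Un: "shift (A \<union> B) n = shift A n \<union> shift B n"
  unfolding shift_def by auto

lemma shift_Int: "shift (A \<inter> B) n = shift A n \<inter> shift B n"
  unfolding shift_def by auto

lemma shift_Diff: "shift (A - B) n = shift A n - shift B n"
  unfolding shift_def by auto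

lemma shift_empty[simp]: "shift {} n = {}"
  unfolding shift_def by auto

lemma shift_inj: "shift A n = shift B n \<longleftrightarrow> A = B"
  unfolding shift_def by (auto simp: inj_image_eq_iff inj_on_def)

lemma shift_shift: "shift (shift A m) n = shift A (m + n)"
  unfolding shift_def by (auto simp: image_image add.assoc)

lemma shift_0[simp]: "shift A 0 = A"
  unfolding shift_def by auto

lemma shift_interval: "shift {1..m} n = {n+1..n+m}"
  unfolding shift_def by (auto simp: image_iff intro: bexI[of _ "x - n" for x])

lemma shift_mono: "A \<subseteq> B \<Longrightarrow> shift A n \<subseteq> shift B n"
  unfolding shift_def by auto

lemma interval_Un_shift: "{1..n+m} = {1..n} \<union> shift {1..m} n"
  unfolding shift_interval by auto

lemma Un_shift_subset_interval:
  assumes "Y \<subseteq> {1..n}" "Y' \<subseteq> {1..m}"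
  shows "Y \<union> shift Y' n \<subseteq> {1..n+m}"
  using assms shift_mono[OF assms(2), of n] interval_Un_shift[of n m] by auto

lemma card_Un_shift:
  assumes "Y \<subseteq> {1..n}" "Y' \<subseteq> {1..m}"
  shows "card (Y \<union> shift Y' n) = card Y + card Y'"
proof -
  have "Y \<inter> shift Y' n = {}" using assms shift_gt[OF assms(2)] by fastforce
  moreover have "finite Y" "finite Y'" using assms finite_subset by auto
  ultimately show ?thesis by (simp add: card_Un_disjoint card_shift)
qed

lemma Un_shift_Int:
  assumes "U1 \<subseteq> {1..n}" "U2 \<subseteq> {1..n}" "V1 \<subseteq> {1..m}" "V2 \<subseteq> {1..m}"
  shows "(U1 \<union> shift V1 n) \<inter> (U2 \<union> shift V2 n) = (U1 \<inter> U2) \<union> shift (V1 \<inter> V2) n"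
proof -
  have "U1 \<inter> shift V2 n = {}" "U2 \<inter> shift V1 n = {}"
    using assms shift_gt[OF assms(3)] shift_gt[OF assms(4)] by fastforce+
  then show ?thesis by (auto simp: shift_Int)
qed

lemma Un_shift_eq_iff:
  assumes "U1 \<subseteq> {1..n}" "U2 \<subseteq> {1..n}" "V1 \<subseteq> {1..m}" "V2 \<subseteq> {1..m}"
    "U1 \<union> shift V1 n = U2 \<union> shift V2 n"
  shows "U1 = U2 \<and> V1 = V2"
proof -
  have disjoint: "U1 \<inter> shift V1 n = {}" "U2 \<inter> shift V2 n = {}"
    using assms shift_gt[OF assms(3)] shift_gt[OF assms(4)] by fastforce+
  have "(U1 \<union> shift V1 n) \<inter> {1..n} = U1" "(U2 \<union> shift V2 n) \<inter> {1..n} = U2"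
    using assms shift_gt[OF assms(3)] shift_gt[OF assms(4)] by fastforce+
  then have "U1 = U2" using assms(5) by metis
  moreover have "shift V1 n = shift V2 n"
    using disjoint assms(5) \<open>U1 = U2\<close> by blast
  ultimately show ?thesis by (simp add: shift_inj)
qed

lemma interval_Diff_Un_shift:
  assumes "U \<subseteq> {1..n}" "V \<subseteq> {1..m}"
  shows "{1..n+m} - (U \<union> shift V n) = ({1..n} - U) \<union> shift ({1..m} - V) n"
proof -
  have "{1..n} \<inter> shift {1..m} n = {}" using shift_gt[of "{1..m}" m] by fastforce
  then show ?thesis using assms shift_gt[of V m] unfolding interval_Un_shift shift_Diff by fastforce
qed

lemma std_map_Un_shift_left:
  assumes "Y \<subseteq> {1..n}" "Y' \<subseteq> {1..m}" "x \<in> Y"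
  shows "std_map (Y \<union> shift Y' n) x = std_map Y x"
proof -
  have "x \<le> n" using assms by auto
  have "{y \<in> Y \<union> shift Y' n. y \<le> x} = {y \<in> Y. y \<le> x}"
  proof (rule set_eqI)
    fix y
    have "y \<in> shift Y' n \<Longrightarrow> y > n" using shift_subset_interval[OF assms(2), of n] by auto
    then show "y \<in> {y \<in> Y \<union> shift Y' n. y \<le> x} \<longleftrightarrow> y \<in> {y \<in> Y. y \<le> x}"
      using \<open>x \<le> n\<close> by auto
  qed
  then show ?thesis unfolding std_map_def by simp
qed

lemma std_map_Un_shift_right:
  assumes "Y \<subseteq> {1..n}" "Y' \<subseteq> {1..m}" "y \<in> Y'"
  shows "std_map (Y \<union> shift Y' n) (y + n) = card Y + std_map Y' y"
proof -
  have fY: "finite Y" "finite Y'" using assms finite_subset by auto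
  have "{w \<in> Y \<union> shift Y' n. w \<le> y + n} = Y \<union> shift {z \<in> Y'. z \<le> y} n"
  proof (rule set_eqI)
    fix w
    show "w \<in> {w \<in> Y \<union> shift Y' n. w \<le> y + n} \<longleftrightarrow> w \<in> Y \<union> shift {z \<in> Y'. z \<le> y} n"
      using assms by (auto simp: mem_shift)
  qed
  moreover have "card (Y \<union> shift {z \<in> Y'. z \<le> y} n) = card Y + card {z \<in> Y'. z \<le> y}"
  proof -
    have "Y \<inter> shift {z \<in> Y'. z \<le> y} n = {}" using assms unfolding shift_def by fastforce
    then show ?thesis using fY by (simp add: card_Un_disjoint card_shift)
  qed
  ultimately show ?thesis unfolding std_map_def by simp
qed

lemma std_map_image_Un_shift:
  assumes "Y \<subseteq> {1..n}" "Y' \<subseteq> {1..m}" "A \<subseteq> Y" "A' \<subseteq> Y'"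
  shows "std_map (Y \<union> shift Y' n) ` (A \<union> shift A' n) = std_map Y ` A \<union> shift (std_map Y' ` A') (card Y)"
proof -
  have "std_map (Y \<union> shift Y' n) ` A = std_map Y ` A"
    using std_map_Un_shift_left[OF assms(1,2)] assms(3) by (intro image_cong) auto
  moreover have "std_map (Y \<union> shift Y' n) ` shift A' n = shift (std_map Y' ` A') (card Y)"
  proof -
    have "std_map (Y \<union> shift Y' n) ` shift A' n = (\<lambda>y. std_map (Y \<union> shift Y' n) (y + n)) ` A'"
      unfolding shift_def by (simp add: image_image)
    also have "\<dots> = (\<lambda>y. card Y + std_map Y' y) ` A'"
      using std_map_Un_shift_right[OF assms(1,2)] assms(4) by (intro image_cong) auto
    also have "\<dots> = shift (std_map Y' ` A') (card Y)"
      unfolding shift_def by (simp add: image_image add.commute)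
    finally show ?thesis .
  qed
  ultimately show ?thesis by (simp add: image_Un)
qed

lemma std_map_image_Un_shift_Int:
  assumes "Y \<subseteq> {1..n}" "Y' \<subseteq> {1..m}" "U \<subseteq> {1..n}" "V \<subseteq> {1..m}"
  shows "std_map (Y \<union> shift Y' n) ` ((U \<union> shift V n) \<inter> (Y \<union> shift Y' n)) =
         std_map Y ` (U \<inter> Y) \<union> shift (std_map Y' ` (V \<inter> Y')) (card Y)"
proof -
  have "(U \<union> shift V n) \<inter> (Y \<union> shift Y' n) = (U \<inter> Y) \<union> shift (V \<inter> Y') n"
    by (rule Un_shift_Int) (use assms in auto)
  then show ?thesis using std_map_image_Un_shift[OF assms(1,2), of "U \<inter> Y" "V \<inter> Y'"] by auto
qed

section \<open>The two products\<close>

definition concat_opens :: "(nat set \<Rightarrow> nat set \<Rightarrow> bool) \<Rightarrow> ftop \<Rightarrow> ftop \<Rightarrow> nat set set" where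
  "concat_opens P a b = {U \<union> shift V (deg a) | U V. U \<in> opens a \<and> V \<in> opens b \<and> P U V}"

lemma concat_opens_image:
  "concat_opens P a b = (\<lambda>(U, V). U \<union> shift V (deg a)) ` {(U, V) \<in> opens a \<times> opens b. P U V}"
  unfolding concat_opens_def by auto

lemma is_topo_concat_opens:
  assumes "P {} {}" and "P {1..deg a} {1..deg b}"
    and closed: "\<And>U1 V1 U2 V2. U1 \<in> opens a \<Longrightarrow> V1 \<in> opens b \<Longrightarrow> U2 \<in> opens a \<Longrightarrow> V2 \<in> opens b \<Longrightarrow>
      P U1 V1 \<Longrightarrow> P U2 V2 \<Longrightarrow> P (U1 \<union> U2) (V1 \<union> V2) \<and> P (U1 \<inter> U2) (V1 \<inter> V2)"
  shows "is_topo (deg a + deg b) (concat_opens P a b)"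
  unfolding is_topo_def
proof (intro conjI ballI)
  show "concat_opens P a b \<subseteq> Pow {1..deg a + deg b}"
  proof
    fix X assume "X \<in> concat_opens P a b"
    then obtain U V where "U \<in> opens a" "V \<in> opens b" "X = U \<union> shift V (deg a)"
      unfolding concat_opens_def by blast
    then show "X \<in> Pow {1..deg a + deg b}"
      using opens_subset[of U a] shift_mono[OF opens_subset[of V b]] unfolding interval_Un_shift by blast
  qed
  have "{} = {} \<union> shift {} (deg a)" by simp
  moreover have "{1..deg a + deg b} = {1..deg a} \<union> shift {1..deg b} (deg a)" by (rule interval_Un_shift)
  ultimately show "{} \<in> concat_opens P a b" "{1..deg a + deg b} \<in> concat_opens P a b"
    unfolding concat_opens_def using assms(1,2) opens_empty opens_full by blast+
next
  fix A B assume "A \<in> concat_opens P a b" "B \<in> concat_opens P a b"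
  then obtain U1 V1 U2 V2 where h: "U1 \<in> opens a" "V1 \<in> opens b" "U2 \<in> opens a" "V2 \<in> opens b"
    "P U1 V1" "P U2 V2" "A = U1 \<union> shift V1 (deg a)" "B = U2 \<union> shift V2 (deg a)"
    unfolding concat_opens_def by blast
  have "A \<union> B = (U1 \<union> U2) \<union> shift (V1 \<union> V2) (deg a)" using h by (auto simp: shift_Un)
  then show "A \<union> B \<in> concat_opens P a b" unfolding concat_opens_def
    using opens_Un[OF h(1,3)] opens_Un[OF h(2,4)] closed[OF h(1-6)] by blast
  have "A \<inter> B = (U1 \<inter> U2) \<union> shift (V1 \<inter> V2) (deg a)"
    unfolding h(7,8) by (rule Un_shift_Int) (use h opens_subset in auto)
  then show "A \<inter> B \<in> concat_opens P a b" unfolding concat_opens_def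
    using opens_Int[OF h(1,3)] opens_Int[OF h(2,4)] closed[OF h(1-6)] by blast
qed

lemma mem_concat_opens_nested_left:
  assumes ab: "deg ab = deg a + deg b" "opens ab = concat_opens Q a b"
  shows "X \<in> concat_opens P ab c \<longleftrightarrow> (\<exists>U V W. U \<in> opens a \<and> V \<in> opens b \<and> W \<in> opens c \<and>
    Q U V \<and> P (U \<union> shift V (deg a)) W \<and> X = U \<union> shift V (deg a) \<union> shift W (deg a + deg b))"
proof
  assume "X \<in> concat_opens P ab c"
  then obtain Y W where Y: "Y \<in> concat_opens Q a b" and W: "W \<in> opens c" "P Y W" "X = Y \<union> shift W (deg ab)"
    unfolding concat_opens_def[of P] ab(2) by blast
  from Y obtain U V where "U \<in> opens a" "V \<in> opens b" "Q U V" "Y = U \<union> shift V (deg a)"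
    unfolding concat_opens_def by blast
  with W ab(1) show "\<exists>U V W. U \<in> opens a \<and> V \<in> opens b \<and> W \<in> opens c \<and>
    Q U V \<and> P (U \<union> shift V (deg a)) W \<and> X = U \<union> shift V (deg a) \<union> shift W (deg a + deg b)" by auto
next
  assume "\<exists>U V W. U \<in> opens a \<and> V \<in> opens b \<and> W \<in> opens c \<and>
    Q U V \<and> P (U \<union> shift V (deg a)) W \<and> X = U \<union> shift V (deg a) \<union> shift W (deg a + deg b)"
  then obtain U V W where UVW: "U \<in> opens a" "V \<in> opens b" "W \<in> opens c" "Q U V"
    "P (U \<union> shift V (deg a)) W" "X = U \<union> shift V (deg a) \<union> shift W (deg ab)" using ab(1) by auto
  then have "U \<union> shift V (deg a) \<in> opens ab" unfolding ab(2) concat_opens_def by blast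
  with UVW show "X \<in> concat_opens P ab c" unfolding concat_opens_def by blast
qed

lemma mem_concat_opens_nested_right:
  assumes bc: "opens bc = concat_opens Q b c"
  shows "X \<in> concat_opens P a bc \<longleftrightarrow> (\<exists>U V W. U \<in> opens a \<and> V \<in> opens b \<and> W \<in> opens c \<and>
    Q V W \<and> P U (V \<union> shift W (deg b)) \<and> X = U \<union> shift V (deg a) \<union> shift W (deg a + deg b))"
proof -
  have nested: "U \<union> shift (V \<union> shift W (deg b)) (deg a) = U \<union> shift V (deg a) \<union> shift W (deg a + deg b)"
    for U V W by (simp add: shift_Un shift_shift Un_assoc add.commute)
  show ?thesis
  proof
    assume "X \<in> concat_opens P a bc"
    then obtain U Z where U: "U \<in> opens a" and Z: "Z \<in> concat_opens Q b c" "P U Z" "X = U \<union> shift Z (deg a)"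
      unfolding concat_opens_def[of P] bc by blast
    from Z obtain V W where "V \<in> opens b" "W \<in> opens c" "Q V W" "Z = V \<union> shift W (deg b)"
      unfolding concat_opens_def by blast
    with U Z nested show "\<exists>U V W. U \<in> opens a \<and> V \<in> opens b \<and> W \<in> opens c \<and>
      Q V W \<and> P U (V \<union> shift W (deg b)) \<and> X = U \<union> shift V (deg a) \<union> shift W (deg a + deg b)" by metis
  next
    assume "\<exists>U V W. U \<in> opens a \<and> V \<in> opens b \<and> W \<in> opens c \<and>
      Q V W \<and> P U (V \<union> shift W (deg b)) \<and> X = U \<union> shift V (deg a) \<union> shift W (deg a + deg b)"
    then obtain U V W where UVW: "U \<in> opens a" "V \<in> opens b" "W \<in> opens c" "Q V W"
      "P U (V \<union> shift W (deg b))" "X = U \<union> shift (V \<union> shift W (deg b)) (deg a)" using nested by metis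
    then have "V \<union> shift W (deg b) \<in> opens bc" unfolding bc concat_opens_def by blast
    with UVW show "X \<in> concat_opens P a bc" unfolding concat_opens_def by blast
  qed
qed

lemma concat_opens_assoc:
  assumes ab: "deg ab = deg a + deg b" "opens ab = concat_opens Q a b"
    and bc: "opens bc = concat_opens Q' b c"
    and cond: "\<And>U V W. U \<in> opens a \<Longrightarrow> V \<in> opens b \<Longrightarrow> W \<in> opens c \<Longrightarrow>
      Q U V \<and> P (U \<union> shift V (deg a)) W \<longleftrightarrow> Q' V W \<and> P' U (V \<union> shift W (deg b))"
  shows "concat_opens P ab c = concat_opens P' a bc"
  unfolding set_eq_iff mem_concat_opens_nested_left[OF ab] mem_concat_opens_nested_right[OF bc]
  using cond by blast

lemma std_restr_concat:
  assumes Y: "Y \<subseteq> {1..deg a}" "Y' \<subseteq> {1..deg b}"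
    and ab: "deg ab = deg a + deg b" "opens ab = concat_opens P a b"
    and ab': "deg ab' = card Y + card Y'" "opens ab' = concat_opens P' (std_restr a Y) (std_restr b Y')"
    and transfer: "(\<lambda>(U, V). (std_map Y ` (U \<inter> Y), std_map Y' ` (V \<inter> Y'))) ` {(U, V) \<in> opens a \<times> opens b. P U V}
      = {(U', V') \<in> opens (std_restr a Y) \<times> opens (std_restr b Y'). P' U' V'}"
  shows "std_restr ab (Y \<union> shift Y' (deg a)) = ab'"
proof (rule ftop_eqI)
  let ?W = "Y \<union> shift Y' (deg a)"
  have W: "?W \<subseteq> {1..deg ab}" using Un_shift_subset_interval[OF Y] ab(1) by simp
  show "deg (std_restr ab ?W) = deg ab'"
    using W Y ab' by (simp add: deg_std_restr card_Un_shift)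
  let ?I = "{(U, V) \<in> opens a \<times> opens b. P U V}"
    and ?std = "\<lambda>(U, V). (std_map Y ` (U \<inter> Y), std_map Y' ` (V \<inter> Y'))"
    and ?cat = "\<lambda>n (U, V). U \<union> shift V n"
  have "std_map ?W ` (?cat (deg a) p \<inter> ?W) = ?cat (card Y) (?std p)" if p: "p \<in> ?I" for p
  proof -
    obtain U V where "p = (U, V)" "U \<subseteq> {1..deg a}" "V \<subseteq> {1..deg b}"
      using p opens_subset by blast
    then show ?thesis using std_map_image_Un_shift_Int[OF Y] by simp
  qed
  then have "opens (std_restr ab ?W) = ?cat (card Y) ` ?std ` ?I"
    unfolding opens_std_restr_image[OF W] ab(2) concat_opens_image image_image
    by (rule image_cong[OF refl])
  also have "\<dots> = opens ab'"
    unfolding transfer ab'(2) concat_opens_image using Y by (simp add: deg_std_restr)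
  finally show "opens (std_restr ab ?W) = opens ab'" .
qed

lemma top_delta_concat:
  fixes mu :: "ftop \<Rightarrow> ftop \<Rightarrow> ftop"
  assumes ab: "deg ab = deg a + deg b" "opens ab = concat_opens P a b"
    and std: "\<And>Y Y'. Y \<subseteq> {1..deg a} \<Longrightarrow> Y' \<subseteq> {1..deg b} \<Longrightarrow>
      std_restr ab (Y \<union> shift Y' (deg a)) = mu (std_restr a Y) (std_restr b Y')"
  shows "(top_delta ab :: _ \<Rightarrow>\<^sub>0 'k::field) = (\<Sum>(U, V) \<in> {(U, V) \<in> opens a \<times> opens b. P U V}.
           bvec (mu (std_compl a U) (std_compl b V), mu (std_restr a U) (std_restr b V)))"
proof -
  let ?h = "\<lambda>(U, V). U \<union> shift V (deg a)" and ?I = "{(U, V) \<in> opens a \<times> opens b. P U V}"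
  have inj: "inj_on ?h ?I"
    by (rule inj_onI) (auto dest: Un_shift_eq_iff[OF opens_subset opens_subset opens_subset opens_subset])
  have vals: "bvec (std_compl ab (?h p), std_restr ab (?h p)) = (\<lambda>(U, V).
      (bvec (mu (std_compl a U) (std_compl b V), mu (std_restr a U) (std_restr b V)) :: _ \<Rightarrow>\<^sub>0 'k)) p"
    if p: "p \<in> ?I" for p
  proof -
    obtain U V where UV: "p = (U, V)" "U \<subseteq> {1..deg a}" "V \<subseteq> {1..deg b}"
      using p opens_subset by blast
    have "{1..deg ab} - (U \<union> shift V (deg a)) = ({1..deg a} - U) \<union> shift ({1..deg b} - V) (deg a)"
      using interval_Diff_Un_shift[OF UV(2,3)] ab(1) by simp
    then show ?thesis using UV std[of "{1..deg a} - U" "{1..deg b} - V"] std[OF UV(2,3)] by auto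
  qed
  have "top_delta ab = (\<Sum>X \<in> ?h ` ?I. (bvec (std_compl ab X, std_restr ab X) :: _ \<Rightarrow>\<^sub>0 'k))"
    unfolding top_delta_def ab(2) concat_opens_image ..
  also have "\<dots> = (\<Sum>p \<in> ?I. bvec (std_compl ab (?h p), std_restr ab (?h p)))"
    by (rule sum.reindex[OF inj, unfolded comp_def])
  also have "\<dots> = (\<Sum>(U, V) \<in> ?I. bvec (mu (std_compl a U) (std_compl b V), mu (std_restr a U) (std_restr b V)))"
    by (rule sum.cong[OF refl vals])
  finally show ?thesis .
qed

lemma
  shows deg_top_dot[simp]: "deg (top_dot a b) = deg a + deg b"
    and opens_top_dot: "opens (top_dot a b) = concat_opens (\<lambda>_ _. True) a b"
proof -
  have "top_dot a b = Abs_ftop (deg a + deg b, concat_opens (\<lambda>_ _. True) a b)"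
    unfolding top_dot_def concat_opens_def by simp
  moreover have "is_topo (deg a + deg b) (concat_opens (\<lambda>_ _. True) a b)"
    by (rule is_topo_concat_opens) simp_all
  ultimately show "deg (top_dot a b) = deg a + deg b" "opens (top_dot a b) = concat_opens (\<lambda>_ _. True) a b"
    by (simp_all add: deg_opens_Abs_ftop)
qed

lemma
  shows deg_top_down[simp]: "deg (top_down a b) = deg a + deg b"
    and opens_top_down: "opens (top_down a b) = concat_opens (\<lambda>U V. U = {} \<or> V = {1..deg b}) a b"
proof -
  let ?P = "\<lambda>U V. U = {} \<or> V = {1..deg b}"
  have "{U \<union> shift {1..deg b} (deg a) | U. U \<in> opens a} \<union> {shift V (deg a) | V. V \<in> opens b}
        = concat_opens ?P a b"
  proof (rule set_eqI, rule iffI)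
    fix X assume "X \<in> {U \<union> shift {1..deg b} (deg a) | U. U \<in> opens a} \<union> {shift V (deg a) | V. V \<in> opens b}"
    then show "X \<in> concat_opens ?P a b"
    proof (elim UnE CollectE exE conjE)
      fix U assume "U \<in> opens a" "X = U \<union> shift {1..deg b} (deg a)"
      then show ?thesis unfolding concat_opens_def using opens_full[of b] by blast
    next
      fix V assume "V \<in> opens b" "X = shift V (deg a)"
      then have "X = {} \<union> shift V (deg a)" by simp
      then show ?thesis unfolding concat_opens_def using opens_empty[of a] \<open>V \<in> opens b\<close> by blast
    qed
  next
    fix X assume "X \<in> concat_opens ?P a b"
    then show "X \<in> {U \<union> shift {1..deg b} (deg a) | U. U \<in> opens a} \<union> {shift V (deg a) | V. V \<in> opens b}"
      unfolding concat_opens_def by auto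
  qed
  then have "top_down a b = Abs_ftop (deg a + deg b, concat_opens ?P a b)"
    unfolding top_down_def by simp
  moreover have "is_topo (deg a + deg b) (concat_opens ?P a b)"
    by (rule is_topo_concat_opens) (auto dest!: opens_subset)
  ultimately show "deg (top_down a b) = deg a + deg b" "opens (top_down a b) = concat_opens ?P a b"
    by (simp_all add: deg_opens_Abs_ftop)
qed

lemma top_dot_one_left[simp]: "top_dot top_one a = a"
  and top_dot_one_right[simp]: "top_dot a top_one = a"
  and top_down_one_left[simp]: "top_down top_one a = a"
  and top_down_one_right[simp]: "top_down a top_one = a"
  by (auto intro!: ftop_eqI simp: opens_top_dot opens_top_down concat_opens_def)

lemma top_dot_assoc: "top_dot (top_dot a b) c = top_dot a (top_dot b c)"
proof (rule ftop_eqI)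
  show "opens (top_dot (top_dot a b) c) = opens (top_dot a (top_dot b c))"
    unfolding opens_top_dot[of _ c] opens_top_dot[of a]
    by (rule concat_opens_assoc) (simp_all add: opens_top_dot)
qed simp

lemma top_down_assoc: "top_down (top_down a b) c = top_down a (top_down b c)"
proof (rule ftop_eqI)
  have full_iff: "V \<union> shift W (deg b) = {1..deg b + deg c} \<longleftrightarrow> V = {1..deg b} \<and> W = {1..deg c}"
    if "V \<in> opens b" "W \<in> opens c" for V W
  proof -
    have full: "{1..deg b + deg c} = {1..deg b} \<union> shift {1..deg c} (deg b)" by (rule interval_Un_shift)
    show ?thesis unfolding full
      using Un_shift_eq_iff[OF opens_subset[OF that(1)] subset_refl opens_subset[OF that(2)] subset_refl] by blast
  qed
  show "opens (top_down (top_down a b) c) = opens (top_down a (top_down b c))"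
    unfolding opens_top_down[of _ c] opens_top_down[of a]
    by (rule concat_opens_assoc) (use full_iff full_iff[OF opens_empty] in \<open>auto simp: opens_top_down shift_def\<close>)
qed simp

lemma unital_assoc_top_dot: "unital_assoc top_dot top_one TYPE('k::field)"
  by (rule unital_assocI) (simp_all add: top_dot_assoc)

lemma unital_assoc_top_down: "unital_assoc top_down top_one TYPE('k::field)"
  by (rule unital_assocI) (simp_all add: top_down_assoc)

lemma alg_mult_top_dot_assoc:
  "alg_mult top_dot (alg_mult top_dot x y) (z :: _ \<Rightarrow>\<^sub>0 'k::field) = alg_mult top_dot x (alg_mult top_dot y z)"
  and alg_mult_top_dot_one_left[simp]: "alg_mult top_dot (bvec top_one) x = x"
  and alg_mult_top_dot_one_right[simp]: "alg_mult top_dot x (bvec top_one) = x"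
  using unital_assoc_top_dot[where 'k = 'k] unfolding unital_assoc_def by blast+

lemma std_restr_top_dot:
  assumes "Y \<subseteq> {1..deg a}" "Y' \<subseteq> {1..deg b}"
  shows "std_restr (top_dot a b) (Y \<union> shift Y' (deg a)) = top_dot (std_restr a Y) (std_restr b Y')"
  by (rule std_restr_concat[OF assms])
    (use assms in \<open>auto simp: opens_top_dot deg_std_restr opens_std_restr_image\<close>)

lemma std_restr_top_down:
  assumes Y: "Y \<subseteq> {1..deg a}" "Y' \<subseteq> {1..deg b}"
  shows "std_restr (top_down a b) (Y \<union> shift Y' (deg a)) = top_down (std_restr a Y) (std_restr b Y')"
proof (rule std_restr_concat[OF Y])
  let ?f = "\<lambda>U. std_map Y ` (U \<inter> Y)" and ?g = "\<lambda>V. std_map Y' ` (V \<inter> Y')"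
  have g_full: "?g {1..deg b} = {1..deg (std_restr b Y')}"
    using Y std_map_image[of Y'] finite_subset[OF Y(2)] by (simp add: deg_std_restr Int_absorb1)
  show "(\<lambda>(U, V). (?f U, ?g V)) ` {(U, V) \<in> opens a \<times> opens b. U = {} \<or> V = {1..deg b}} =
    {(U', V') \<in> opens (std_restr a Y) \<times> opens (std_restr b Y'). U' = {} \<or> V' = {1..deg (std_restr b Y')}}"
  proof (intro equalityI subsetI)
    fix p assume "p \<in> {(U', V') \<in> opens (std_restr a Y) \<times> opens (std_restr b Y'). U' = {} \<or> V' = {1..deg (std_restr b Y')}}"
    then obtain U V where UV: "U \<in> opens a" "V \<in> opens b" "p = (?f U, ?g V)" "?f U = {} \<or> ?g V = {1..deg (std_restr b Y')}"
      using Y by (auto simp: opens_std_restr_image)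
    from UV(4) have "p = (?f {}, ?g V) \<or> p = (?f U, ?g {1..deg b})"
      using UV(3) g_full by auto
    then show "p \<in> (\<lambda>(U, V). (?f U, ?g V)) ` {(U, V) \<in> opens a \<times> opens b. U = {} \<or> V = {1..deg b}}"
      using UV(1,2) opens_empty[of a] opens_full[of b] by (elim disjE) (force intro: image_eqI)+
  qed (use Y g_full in \<open>auto simp: opens_std_restr_image\<close>)
qed (use Y in \<open>simp_all add: opens_top_down deg_std_restr\<close>)

lemma is_topo_iota: "is_topo (deg t) {{1..deg t} - U | U. U \<in> opens t}"
  unfolding is_topo_def Setcompr_eq_image
proof (intro conjI ballI)
  show "(\<lambda>U. {1..deg t} - U) ` opens t \<subseteq> Pow {1..deg t}" by auto
  have "{} = {1..deg t} - {1..deg t}" by simp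
  then show "{} \<in> (\<lambda>U. {1..deg t} - U) ` opens t" using opens_full[of t] by (rule image_eqI)
  have "{1..deg t} = {1..deg t} - {}" by simp
  then show "{1..deg t} \<in> (\<lambda>U. {1..deg t} - U) ` opens t" using opens_empty[of t] by (rule image_eqI)
next
  fix A B assume "A \<in> (\<lambda>U. {1..deg t} - U) ` opens t" "B \<in> (\<lambda>U. {1..deg t} - U) ` opens t"
  then obtain U V where h: "U \<in> opens t" "V \<in> opens t" "A = {1..deg t} - U" "B = {1..deg t} - V" by blast
  have "A \<union> B = {1..deg t} - (U \<inter> V)" "A \<inter> B = {1..deg t} - (U \<union> V)" using h by auto
  then show "A \<union> B \<in> (\<lambda>U. {1..deg t} - U) ` opens t" "A \<inter> B \<in> (\<lambda>U. {1..deg t} - U) ` opens t"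
    using opens_Int[OF h(1,2)] opens_Un[OF h(1,2)] by (auto intro: image_eqI)
qed

lemma deg_top_iota[simp]: "deg (top_iota t) = deg t"
  and opens_top_iota: "opens (top_iota t) = (\<lambda>U. {1..deg t} - U) ` opens t"
  using deg_opens_Abs_ftop[OF is_topo_iota] unfolding top_iota_def by (auto simp: Setcompr_eq_image)

lemma top_iota_top_iota[simp]: "top_iota (top_iota t) = t"
proof (rule ftop_eqI)
  have double_compl: "\<And>U. U \<in> opens t \<Longrightarrow> {1..deg t} - ({1..deg t} - U) = U" using opens_subset by auto
  show "opens (top_iota (top_iota t)) = opens t"
  proof -
    have "(\<lambda>U. {1..deg t} - ({1..deg t} - U)) ` opens t = (\<lambda>U. U) ` opens t"
      by (rule image_cong[OF refl double_compl])
    then show ?thesis unfolding opens_top_iota deg_top_iota image_image by simp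
  qed
qed simp

lemma top_iota_top_one[simp]: "top_iota top_one = top_one"
  by (rule ftop_eqI) (auto simp: opens_top_iota)

lemma top_iota_top_dot: "top_iota (top_dot a b) = top_dot (top_iota a) (top_iota b)"
proof (rule ftop_eqI)
  have "{1..deg a + deg b} - (U \<union> shift V (deg a)) = ({1..deg a} - U) \<union> shift ({1..deg b} - V) (deg a)"
    if "U \<in> opens a" "V \<in> opens b" for U V
    by (rule interval_Diff_Un_shift) (use that opens_subset in auto)
  then have "opens (top_iota (top_dot a b)) =
      (\<lambda>(U, V). ({1..deg a} - U) \<union> shift ({1..deg b} - V) (deg a)) ` (opens a \<times> opens b)"
    unfolding opens_top_iota opens_top_dot concat_opens_image deg_top_dot image_image
    by (auto intro!: image_cong)
  also have "\<dots> = opens (top_dot (top_iota a) (top_iota b))"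
    unfolding opens_top_dot concat_opens_image opens_top_iota deg_top_iota by (auto simp: image_iff)
  finally show "opens (top_iota (top_dot a b)) = opens (top_dot (top_iota a) (top_iota b))" .
qed simp

lemma std_restr_top_iota:
  assumes "Y \<subseteq> {1..deg t}"
  shows "std_restr (top_iota t) Y = top_iota (std_restr t Y)"
proof (rule ftop_eqI)
  show "deg (std_restr (top_iota t) Y) = deg (top_iota (std_restr t Y))" using assms by (simp add: deg_std_restr)
  have compl_trace: "std_map Y ` (({1..deg t} - U) \<inter> Y) = {1..card Y} - std_map Y ` (U \<inter> Y)" for U
  proof -
    have "({1..deg t} - U) \<inter> Y = Y - U \<inter> Y" using assms by auto
    then show ?thesis using std_map_image_Diff[OF finite_subset[OF assms], of "U \<inter> Y"] by simp
  qed
  show "opens (std_restr (top_iota t) Y) = opens (top_iota (std_restr t Y))"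
  proof -
    have "opens (std_restr (top_iota t) Y) = (\<lambda>U. std_map Y ` (({1..deg t} - U) \<inter> Y)) ` opens t"
      using assms by (simp add: opens_std_restr_image opens_top_iota image_image)
    also have "\<dots> = (\<lambda>U. {1..card Y} - std_map Y ` (U \<inter> Y)) ` opens t"
      by (rule image_cong[OF refl compl_trace])
    also have "\<dots> = opens (top_iota (std_restr t Y))"
      using assms by (simp add: opens_std_restr_image opens_top_iota image_image deg_std_restr)
    finally show ?thesis .
  qed
qed

lemma top_delta_top_one: "top_delta top_one = bvec (top_one, top_one)"
  by (simp add: top_delta_def)

lemma lin_top_delta: "lin G (top_delta t :: _ \<Rightarrow>\<^sub>0 'k::field) = (\<Sum>U\<in>opens t. G (std_compl t U, std_restr t U))"
  unfolding top_delta_def by (simp add: lin_sum)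

lemma top_delta_op_eq: "(top_delta_op t :: _ \<Rightarrow>\<^sub>0 'k::field) = (\<Sum>U\<in>opens t. bvec (std_restr t U, std_compl t U))"
  unfolding top_delta_op_def tflip_def by (simp add: lin_top_delta)

lemma lin_top_delta_op: "lin G (top_delta_op t :: _ \<Rightarrow>\<^sub>0 'k::field) = (\<Sum>U\<in>opens t. G (std_restr t U, std_compl t U))"
  unfolding top_delta_op_eq by (simp add: lin_sum)

lemma top_delta_top_dot:
  "(top_delta (top_dot a b) :: _ \<Rightarrow>\<^sub>0 'k::field) = tens_mult (alg_mult top_dot) (top_delta a) (top_delta b)"
proof -
  have "(top_delta (top_dot a b) :: _ \<Rightarrow>\<^sub>0 'k) = (\<Sum>U\<in>opens a. \<Sum>V\<in>opens b.
      bvec (top_dot (std_compl a U) (std_compl b V), top_dot (std_restr a U) (std_restr b V)))"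
    by (subst top_delta_concat[OF deg_top_dot opens_top_dot std_restr_top_dot])
      (simp_all add: sum.cartesian_product)
  then show ?thesis
    unfolding top_delta_def[of a] top_delta_def[of b]
    by (simp add: tens_mult_sum_left tens_mult_sum_right) (rule sum.swap)
qed

lemma top_delta_op_top_dot:
  "(top_delta_op (top_dot a b) :: _ \<Rightarrow>\<^sub>0 'k::field) = tens_mult (alg_mult top_dot) (top_delta_op a) (top_delta_op b)"
  unfolding top_delta_op_def top_delta_top_dot top_delta_def[of a] top_delta_def[of b] tflip_def
  by (simp add: tens_mult_sum_left tens_mult_sum_right lin_sum)

lemma top_delta_top_down:
  "(top_delta (top_down a b) :: _ \<Rightarrow>\<^sub>0 'k::field) =
     tens_mult (alg_mult top_down) (bvec (a, top_one)) (top_delta b)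
   + tens_mult (alg_mult top_down) (top_delta a) (bvec (top_one, b)) - bvec (a, b)"
proof -
  let ?g = "\<lambda>(U, V). (bvec (top_down (std_compl a U) (std_compl b V), top_down (std_restr a U) (std_restr b V)) :: _ \<Rightarrow>\<^sub>0 'k)"
  let ?L = "{{}} \<times> opens b" and ?R = "opens a \<times> {{1..deg b}}"
  have "{(U, V) \<in> opens a \<times> opens b. U = {} \<or> V = {1..deg b}} = ?L \<union> ?R" by auto
  then have "top_delta (top_down a b) = sum ?g (?L \<union> ?R)"
    by (simp only: top_delta_concat[OF deg_top_down opens_top_down std_restr_top_down])
  moreover have "?L \<inter> ?R = {({}, {1..deg b})}" by auto
  moreover have "sum ?g (?L \<union> ?R) + sum ?g (?L \<inter> ?R) = sum ?g ?L + sum ?g ?R"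
    by (rule sum.union_inter) simp_all
  ultimately have "top_delta (top_down a b) + ?g ({}, {1..deg b}) = sum ?g ?L + sum ?g ?R"
    by simp
  also have "sum ?g ?L = (\<Sum>V\<in>opens b. bvec (top_down a (std_compl b V), std_restr b V))"
    by (simp add: sum.cartesian_product[symmetric])
  also have "sum ?g ?R = (\<Sum>U\<in>opens a. bvec (std_compl a U, top_down (std_restr a U) b))"
    by (simp add: sum.cartesian_product[symmetric])
  finally show ?thesis
    unfolding top_delta_def[of a] top_delta_def[of b]
    by (simp add: tens_mult_sum_left tens_mult_sum_right algebra_simps)
qed

lemma top_delta_top_iota: "(top_delta (top_iota t) :: _ \<Rightarrow>\<^sub>0 'k::field) =
   (\<Sum>U\<in>opens t. bvec (top_iota (std_restr t U), top_iota (std_compl t U)))"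
proof -
  let ?h = "\<lambda>U. {1..deg t} - U"
  have inj: "inj_on ?h (opens t)"
  proof (rule inj_onI)
    fix U V assume "U \<in> opens t" "V \<in> opens t" "?h U = ?h V"
    then show "U = V" using opens_subset[of U t] opens_subset[of V t] by blast
  qed
  have vals: "(bvec (std_compl (top_iota t) (?h U), std_restr (top_iota t) (?h U)) :: _ \<Rightarrow>\<^sub>0 'k) =
      bvec (top_iota (std_restr t U), top_iota (std_compl t U))" if U: "U \<in> opens t" for U
  proof -
    have "{1..deg t} - ({1..deg t} - U) = U" using opens_subset[OF U] by auto
    then show ?thesis using std_restr_top_iota[of U t] std_restr_top_iota[of "{1..deg t} - U" t] opens_subset[OF U] by simp
  qed
  have "top_delta (top_iota t) = (\<Sum>X\<in>?h ` opens t. (bvec (std_compl (top_iota t) X, std_restr (top_iota t) X) :: _ \<Rightarrow>\<^sub>0 'k))"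
    unfolding top_delta_def opens_top_iota deg_top_iota ..
  also have "\<dots> = (\<Sum>U\<in>opens t. bvec (std_compl (top_iota t) (?h U), std_restr (top_iota t) (?h U)))"
    by (rule sum.reindex[OF inj, unfolded comp_def])
  also have "\<dots> = (\<Sum>U\<in>opens t. bvec (top_iota (std_restr t U), top_iota (std_compl t U)))"
    by (rule sum.cong[OF refl vals])
  finally show ?thesis .
qed

definition counit :: "ftop \<Rightarrow> 'k::field" where
  "counit t = (if deg t = 0 then 1 else 0)"

lemma counit_top_one[simp]: "counit top_one = 1"
  by (simp add: counit_def)

lemma counit_top_dot: "counit (top_dot a b) = (counit a * counit b :: 'k::field)"
  by (simp add: counit_def)

lemma counit_std_compl: "U \<in> opens t \<Longrightarrow> counit (std_compl t U) = (if U = {1..deg t} then 1 else 0)"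
  using opens_subset[of U t] by (auto simp: counit_def deg_std_restr)

lemma counit_std_restr: "U \<in> opens t \<Longrightarrow> counit (std_restr t U) = (if U = {} then 1 else 0)"
  using opens_subset[of U t] finite_open[of U t] by (simp add: counit_def deg_std_restr)

lemma sum_counit_std_compl:
  "(\<Sum>U\<in>opens t. smul (counit (std_compl t U)) (f (std_restr t U)) :: _ \<Rightarrow>\<^sub>0 'k::field) = f t"
proof -
  have "(\<Sum>U\<in>opens t. smul (counit (std_compl t U)) (f (std_restr t U)) :: _ \<Rightarrow>\<^sub>0 'k) =
        (\<Sum>U\<in>opens t. if U = {1..deg t} then f (std_restr t U) else 0)"
  proof (rule sum.cong[OF refl])
    fix U assume "U \<in> opens t"
    then have "counit (std_compl t U) = (if U = {1..deg t} then (1::'k) else 0)" by (rule counit_std_compl)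
    then show "smul (counit (std_compl t U)) (f (std_restr t U)) = (if U = {1..deg t} then f (std_restr t U) else 0)" by simp
  qed
  then show ?thesis by (simp add: sum.delta)
qed

lemma sum_counit_std_restr:
  "(\<Sum>U\<in>opens t. smul (counit (std_restr t U)) (f (std_compl t U)) :: _ \<Rightarrow>\<^sub>0 'k::field) = f t"
proof -
  have "(\<Sum>U\<in>opens t. smul (counit (std_restr t U)) (f (std_compl t U)) :: _ \<Rightarrow>\<^sub>0 'k) =
        (\<Sum>U\<in>opens t. if U = {} then f (std_compl t U) else 0)"
  proof (rule sum.cong[OF refl])
    fix U assume "U \<in> opens t"
    then have "counit (std_restr t U) = (if U = {} then (1::'k) else 0)" by (rule counit_std_restr)
    then show "smul (counit (std_restr t U)) (f (std_compl t U)) = (if U = {} then f (std_compl t U) else 0)" by simp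
  qed
  then show ?thesis by (simp add: sum.delta)
qed

lemma is_counit_top_delta: "is_counit (top_delta :: ftop \<Rightarrow> (ftop \<times> ftop \<Rightarrow>\<^sub>0 'k::field)) counit"
  unfolding is_counit_def
  using sum_counit_std_compl[where f = "bvec :: ftop \<Rightarrow> ftop \<Rightarrow>\<^sub>0 'k"]
    sum_counit_std_restr[where f = "bvec :: ftop \<Rightarrow> ftop \<Rightarrow>\<^sub>0 'k"]
  by (simp add: lin_lin lin_top_delta)

lemma is_counit_top_delta_op: "is_counit (top_delta_op :: ftop \<Rightarrow> (ftop \<times> ftop \<Rightarrow>\<^sub>0 'k::field)) counit"
  unfolding is_counit_def
  using sum_counit_std_compl[where f = "bvec :: ftop \<Rightarrow> ftop \<Rightarrow>\<^sub>0 'k"]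
    sum_counit_std_restr[where f = "bvec :: ftop \<Rightarrow> ftop \<Rightarrow>\<^sub>0 'k"]
  by (simp add: lin_lin lin_top_delta_op)

lemma deg_keys_top_delta:
  assumes "(c, d) \<in> Poly_Mapping.keys (top_delta a :: _ \<Rightarrow>\<^sub>0 'k::field)"
  shows "deg c + deg d = deg a"
proof -
  obtain U where U: "U \<in> opens a" "c = std_compl a U" "d = std_restr a U"
    using assms keys_sum[of "\<lambda>U. bvec (std_compl a U, std_restr a U)" "opens a"]
    unfolding top_delta_def by auto
  have U_sub: "U \<subseteq> {1..deg a}" using opens_subset[OF U(1)] .
  then have "finite U" "card U \<le> deg a"
    using card_mono[OF _ U_sub] finite_subset by auto
  with U U_sub show ?thesis by (simp add: deg_std_restr card_Diff_subset)
qed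

lemma graded_top_delta:
  assumes "\<And>a b. deg (mu a b) = deg a + deg b"
  shows "graded deg mu top_one (top_delta :: ftop \<Rightarrow> (ftop \<times> ftop \<Rightarrow>\<^sub>0 'k::field))"
  unfolding graded_def using assms deg_keys_top_delta by auto

section \<open>Coassociativity\<close>

text \<open>The open sets of a standardised restriction are the traces of the open sets of \<open>t\<close>; this
  turns both iterated coproducts into sums over flags \<open>O\<^sub>1 \<subseteq> O\<^sub>2\<close> of open sets of \<open>t\<close>.\<close>

definition flag_sum :: "ftop \<Rightarrow> (ftop \<Rightarrow> ftop \<Rightarrow> ftop \<Rightarrow> 'm::comm_monoid_add) \<Rightarrow> 'm" where
  "flag_sum t F = (\<Sum>O1\<in>opens t. \<Sum>O2\<in>{Q \<in> opens t. O1 \<subseteq> Q}.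
      F (std_compl t O2) (std_restr t (O2 - O1)) (std_restr t O1))"

lemma bij_betw_opens_above:
  assumes U: "U \<in> opens t"
  shows "bij_betw (\<lambda>Q. std_map ({1..deg t} - U) ` (Q \<inter> ({1..deg t} - U)))
           {Q \<in> opens t. U \<subseteq> Q} (opens (std_compl t U))"
proof (rule bij_betw_imageI)
  let ?Y = "{1..deg t} - U"
  let ?h = "\<lambda>Q. std_map ?Y ` (Q \<inter> ?Y)"
  show "inj_on ?h {Q \<in> opens t. U \<subseteq> Q}"
  proof (rule inj_onI)
    fix O1 O2 assume O1: "O1 \<in> {Q \<in> opens t. U \<subseteq> Q}" and O2: "O2 \<in> {Q \<in> opens t. U \<subseteq> Q}"
      and "?h O1 = ?h O2"
    then have "O1 \<inter> ?Y = O2 \<inter> ?Y"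
      using inj_on_image_eq_iff[OF inj_on_std_map[of ?Y], of "O1 \<inter> ?Y" "O2 \<inter> ?Y"] by auto
    moreover have "O1 = U \<union> (O1 \<inter> ?Y)" "O2 = U \<union> (O2 \<inter> ?Y)"
      using O1 O2 opens_subset[of O1 t] opens_subset[of O2 t] by auto
    ultimately show "O1 = O2" by metis
  qed
  show "?h ` {Q \<in> opens t. U \<subseteq> Q} = opens (std_compl t U)"
  proof (rule set_eqI, rule iffI)
    fix V assume "V \<in> ?h ` {Q \<in> opens t. U \<subseteq> Q}"
    then show "V \<in> opens (std_compl t U)" by (auto simp: opens_std_restr_image)
  next
    fix V assume "V \<in> opens (std_compl t U)"
    then obtain Q where Q: "Q \<in> opens t" "V = ?h Q" by (auto simp: opens_std_restr_image)
    have "V = ?h (Q \<union> U)" using Q by (metis Diff_disjoint Int_Un_distrib2 Un_empty_right Int_commute)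
    moreover have "Q \<union> U \<in> {Q \<in> opens t. U \<subseteq> Q}" using opens_Un[OF Q(1) U] by auto
    ultimately show "V \<in> ?h ` {Q \<in> opens t. U \<subseteq> Q}" by blast
  qed
qed

lemma bij_betw_opens_below:
  assumes U: "U \<in> opens t"
  shows "bij_betw (\<lambda>Q. std_map U ` Q) {Q \<in> opens t. Q \<subseteq> U} (opens (std_restr t U))"
proof (rule bij_betw_imageI)
  have U_sub: "U \<subseteq> {1..deg t}" using opens_subset[OF U] .
  show "inj_on (\<lambda>Q. std_map U ` Q) {Q \<in> opens t. Q \<subseteq> U}"
    using inj_on_image_eq_iff[OF inj_on_std_map[OF finite_open[OF U]]] by (auto intro: inj_onI)
  show "(\<lambda>Q. std_map U ` Q) ` {Q \<in> opens t. Q \<subseteq> U} = opens (std_restr t U)"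
  proof (rule set_eqI, rule iffI)
    fix V assume "V \<in> (\<lambda>Q. std_map U ` Q) ` {Q \<in> opens t. Q \<subseteq> U}"
    then obtain Q where "Q \<in> opens t" "Q \<subseteq> U" "V = std_map U ` (Q \<inter> U)" by (auto simp: Int_absorb2)
    then show "V \<in> opens (std_restr t U)" using U_sub by (auto simp: opens_std_restr_image)
  next
    fix V assume "V \<in> opens (std_restr t U)"
    then obtain Q where Q: "Q \<in> opens t" "V = std_map U ` (Q \<inter> U)" using U_sub by (auto simp: opens_std_restr_image)
    have "Q \<inter> U \<in> {Q \<in> opens t. Q \<subseteq> U}" using opens_Int[OF Q(1) U] by auto
    then show "V \<in> (\<lambda>Q. std_map U ` Q) ` {Q \<in> opens t. Q \<subseteq> U}" using Q(2) by blast
  qed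
qed

lemma flag_sum_left:
  "(\<Sum>U\<in>opens t. \<Sum>V\<in>opens (std_compl t U).
      F (std_compl (std_compl t U) V) (std_restr (std_compl t U) V) (std_restr t U)) = flag_sum t F"
proof -
  have "(\<Sum>V\<in>opens (std_compl t U). F (std_compl (std_compl t U) V) (std_restr (std_compl t U) V) (std_restr t U))
     = (\<Sum>Q\<in>{Q \<in> opens t. U \<subseteq> Q}. F (std_compl t Q) (std_restr t (Q - U)) (std_restr t U))"
    if U: "U \<in> opens t" for U
  proof (rule sum.reindex_bij_betw[OF bij_betw_opens_above[OF U], symmetric, THEN trans], rule sum.cong[OF refl])
    let ?Y = "{1..deg t} - U"
    fix Q assume Q: "Q \<in> {Q \<in> opens t. U \<subseteq> Q}"
    have "?Y - Q \<inter> ?Y = {1..deg t} - Q" using Q by auto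
    then have "{1..deg (std_compl t U)} - std_map ?Y ` (Q \<inter> ?Y) = std_map ?Y ` ({1..deg t} - Q)"
      using std_map_image_Diff[of ?Y "Q \<inter> ?Y"] by (simp add: deg_std_restr)
    moreover have "Q \<inter> ?Y = Q - U" using Q opens_subset[of Q t] by auto
    moreover have "{1..deg t} - Q \<subseteq> ?Y" "Q - U \<subseteq> ?Y" using Q opens_subset[of Q t] by auto
    ultimately show "F (std_compl (std_compl t U) (std_map ?Y ` (Q \<inter> ?Y))) (std_restr (std_compl t U) (std_map ?Y ` (Q \<inter> ?Y))) (std_restr t U)
        = F (std_compl t Q) (std_restr t (Q - U)) (std_restr t U)"
      by (simp add: std_restr_std_restr)
  qed
  then show ?thesis unfolding flag_sum_def by (rule sum.cong[OF refl])
qed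

lemma flag_sum_right:
  "(\<Sum>U\<in>opens t. \<Sum>W\<in>opens (std_restr t U).
      F (std_compl t U) (std_compl (std_restr t U) W) (std_restr (std_restr t U) W)) = flag_sum t F"
proof -
  have "(\<Sum>W\<in>opens (std_restr t U). F (std_compl t U) (std_compl (std_restr t U) W) (std_restr (std_restr t U) W))
     = (\<Sum>Q\<in>{Q \<in> opens t. Q \<subseteq> U}. F (std_compl t U) (std_restr t (U - Q)) (std_restr t Q))"
    if U: "U \<in> opens t" for U
  proof (rule sum.reindex_bij_betw[OF bij_betw_opens_below[OF U], symmetric, THEN trans], rule sum.cong[OF refl])
    fix Q assume Q: "Q \<in> {Q \<in> opens t. Q \<subseteq> U}"
    have U_sub: "U \<subseteq> {1..deg t}" using opens_subset[OF U] .
    have "{1..deg (std_restr t U)} - std_map U ` Q = std_map U ` (U - Q)"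
      using std_map_image_Diff[OF finite_open[OF U], of Q] U_sub Q by (simp add: deg_std_restr)
    then show "F (std_compl t U) (std_compl (std_restr t U) (std_map U ` Q)) (std_restr (std_restr t U) (std_map U ` Q))
        = F (std_compl t U) (std_restr t (U - Q)) (std_restr t Q)"
      using std_restr_std_restr[OF U_sub, of "U - Q"] std_restr_std_restr[OF U_sub, of Q] Q by auto
  qed
  then have "(\<Sum>U\<in>opens t. \<Sum>W\<in>opens (std_restr t U).
      F (std_compl t U) (std_compl (std_restr t U) W) (std_restr (std_restr t U) W)) =
      (\<Sum>U\<in>opens t. \<Sum>Q\<in>{Q \<in> opens t. Q \<subseteq> U}. F (std_compl t U) (std_restr t (U - Q)) (std_restr t Q))"
    by (rule sum.cong[OF refl])
  also have "\<dots> = flag_sum t F"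
    unfolding flag_sum_def by (rule sum.swap_restrict[symmetric]) simp_all
  finally show ?thesis .
qed

lemma lookup_flag_sum: "Poly_Mapping.lookup (flag_sum t F) k = flag_sum t (\<lambda>X Y Z. Poly_Mapping.lookup (F X Y Z) k)"
  unfolding flag_sum_def by (simp add: lookup_sum)

lemma coassoc_top_delta: "coassoc (top_delta :: ftop \<Rightarrow> (ftop \<times> ftop \<Rightarrow>\<^sub>0 'k::field))"
proof (rule coassocI)
  fix t a b c
  have "(tmap (lin top_delta) id (top_delta t) :: _ \<Rightarrow>\<^sub>0 'k) = (\<Sum>U\<in>opens t. \<Sum>V\<in>opens (std_compl t U).
      bvec ((std_compl (std_compl t U) V, std_restr (std_compl t U) V), std_restr t U))"
    unfolding tmap_def by (simp add: lin_top_delta top_delta_def tens_sum_left lin_sum)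
  also have "\<dots> = flag_sum t (\<lambda>X Y Z. bvec ((X, Y), Z))" by (rule flag_sum_left)
  moreover have "(tmap id (lin top_delta) (top_delta t) :: _ \<Rightarrow>\<^sub>0 'k) = (\<Sum>U\<in>opens t. \<Sum>W\<in>opens (std_restr t U).
      bvec (std_compl t U, (std_compl (std_restr t U) W, std_restr (std_restr t U) W)))"
    unfolding tmap_def by (simp add: lin_top_delta top_delta_def tens_sum_right lin_sum)
  moreover have "\<dots> = flag_sum t (\<lambda>X Y Z. bvec (X, (Y, Z)))" by (rule flag_sum_right)
  ultimately show "Poly_Mapping.lookup (tmap (lin top_delta) id (top_delta t) :: _ \<Rightarrow>\<^sub>0 'k) ((a, b), c) =
      Poly_Mapping.lookup (tmap id (lin top_delta) (top_delta t) :: _ \<Rightarrow>\<^sub>0 'k) (a, (b, c))"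
    by (simp add: lookup_flag_sum lookup_bvec)
qed

lemma coassoc_top_delta_op: "coassoc (top_delta_op :: ftop \<Rightarrow> (ftop \<times> ftop \<Rightarrow>\<^sub>0 'k::field))"
proof (rule coassocI)
  fix t a b c
  have "(tmap (lin top_delta_op) id (top_delta_op t) :: _ \<Rightarrow>\<^sub>0 'k) = (\<Sum>U\<in>opens t. \<Sum>W\<in>opens (std_restr t U).
      bvec ((std_restr (std_restr t U) W, std_compl (std_restr t U) W), std_compl t U))"
    unfolding tmap_def by (simp add: lin_top_delta_op top_delta_op_eq tens_sum_left lin_sum)
  also have "\<dots> = flag_sum t (\<lambda>X Y Z. bvec ((Z, Y), X))" by (rule flag_sum_right)
  moreover have "(tmap id (lin top_delta_op) (top_delta_op t) :: _ \<Rightarrow>\<^sub>0 'k) = (\<Sum>U\<in>opens t. \<Sum>V\<in>opens (std_compl t U).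
      bvec (std_restr t U, (std_restr (std_compl t U) V, std_compl (std_compl t U) V)))"
    unfolding tmap_def by (simp add: lin_top_delta_op top_delta_op_eq tens_sum_right lin_sum)
  moreover have "\<dots> = flag_sum t (\<lambda>X Y Z. bvec (Z, (Y, X)))" by (rule flag_sum_left)
  ultimately show "Poly_Mapping.lookup (tmap (lin top_delta_op) id (top_delta_op t) :: _ \<Rightarrow>\<^sub>0 'k) ((a, b), c) =
      Poly_Mapping.lookup (tmap id (lin top_delta_op) (top_delta_op t) :: _ \<Rightarrow>\<^sub>0 'k) (a, (b, c))"
    by (simp add: lookup_flag_sum lookup_bvec)
qed

lemma counital_coalg_top_delta: "counital_coalg (top_delta :: ftop \<Rightarrow> (ftop \<times> ftop \<Rightarrow>\<^sub>0 'k::field))"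
  unfolding counital_coalg_def using coassoc_top_delta is_counit_top_delta by blast

section \<open>The antipode\<close>

lemma deg_std_compl_less: "U \<in> opens t \<Longrightarrow> U \<noteq> {} \<Longrightarrow> deg (std_compl t U) < deg t"
proof -
  assume U: "U \<in> opens t" "U \<noteq> {}"
  then have "0 < card U" "card U \<le> deg t"
    using finite_open[OF U(1)] card_mono[OF _ opens_subset[OF U(1)]] by auto
  then show ?thesis using opens_subset[OF U(1)] by (simp add: deg_std_restr card_Diff_subset finite_open[OF U(1)])
qed

lemma deg_std_restr_less: "U \<in> opens t \<Longrightarrow> U \<noteq> {1..deg t} \<Longrightarrow> deg (std_restr t U) < deg t"
  using opens_subset[of U t] psubset_card_mono[of "{1..deg t}" U] by (auto simp: deg_std_restr)

function antipode :: "ftop \<Rightarrow> (ftop \<Rightarrow>\<^sub>0 'k::field)" where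
  "antipode t = (if deg t = 0 then bvec top_one else
     - (\<Sum>U\<in>opens t - {{}}. alg_mult top_dot (antipode (std_compl t U)) (bvec (std_restr t U))))"
  by auto
termination by (relation "measure deg") (auto simp: deg_std_compl_less[simplified])

function antipode_right :: "ftop \<Rightarrow> (ftop \<Rightarrow>\<^sub>0 'k::field)" where
  "antipode_right t = (if deg t = 0 then bvec top_one else
     - (\<Sum>U\<in>opens t - {{1..deg t}}. alg_mult top_dot (bvec (std_compl t U)) (antipode_right (std_restr t U))))"
  by auto
termination by (relation "measure deg") (auto simp: deg_std_restr_less[simplified])

declare antipode.simps[simp del] antipode_right.simps[simp del]

lemma antipode_convolution_left:
  "(\<Sum>U\<in>opens t. alg_mult top_dot (antipode (std_compl t U)) (bvec (std_restr t U)))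
     = smul (counit t) (bvec top_one :: _ \<Rightarrow>\<^sub>0 'k::field)"
proof (cases "deg t = 0")
  case True
  then have "t = top_one" by (rule deg_eq_0_imp_top_one)
  then show ?thesis by (simp add: antipode.simps)
next
  case False
  have "(\<Sum>U\<in>opens t. alg_mult top_dot (antipode (std_compl t U)) (bvec (std_restr t U)) :: _ \<Rightarrow>\<^sub>0 'k)
     = antipode t + (\<Sum>U\<in>opens t - {{}}. alg_mult top_dot (antipode (std_compl t U)) (bvec (std_restr t U)))"
    by (subst sum.remove[of _ "{}"]) simp_all
  also have "\<dots> = 0" using False by (subst (1) antipode.simps) simp
  finally show ?thesis using False by (simp add: counit_def)
qed

lemma antipode_right_convolution_right:
  "(\<Sum>U\<in>opens t. alg_mult top_dot (bvec (std_compl t U)) (antipode_right (std_restr t U)))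
     = smul (counit t) (bvec top_one :: _ \<Rightarrow>\<^sub>0 'k::field)"
proof (cases "deg t = 0")
  case True
  then have "t = top_one" by (rule deg_eq_0_imp_top_one)
  then show ?thesis by (simp add: antipode_right.simps)
next
  case False
  have "(\<Sum>U\<in>opens t. alg_mult top_dot (bvec (std_compl t U)) (antipode_right (std_restr t U)) :: _ \<Rightarrow>\<^sub>0 'k)
     = antipode_right t + (\<Sum>U\<in>opens t - {{1..deg t}}. alg_mult top_dot (bvec (std_compl t U)) (antipode_right (std_restr t U)))"
    by (subst sum.remove[of _ "{1..deg t}"]) simp_all
  also have "\<dots> = 0" using False by (subst (1) antipode_right.simps) simp
  finally show ?thesis using False by (simp add: counit_def)
qed

text \<open>A left and a right convolution inverse of the identity agree; both sides of the chain below
  evaluate the flag sum of \<open>antipode \<star> id \<star> antipode_right\<close>.\<close>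

lemma antipode_right_eq_antipode: "(antipode_right t :: _ \<Rightarrow>\<^sub>0 'k::field) = antipode t"
proof -
  let ?F = "\<lambda>X Y Z. alg_mult top_dot (alg_mult top_dot (antipode X) (bvec Y)) (antipode_right Z) :: _ \<Rightarrow>\<^sub>0 'k"
  have "flag_sum t ?F = (\<Sum>U\<in>opens t. alg_mult top_dot (\<Sum>V\<in>opens (std_compl t U).
      alg_mult top_dot (antipode (std_compl (std_compl t U) V)) (bvec (std_restr (std_compl t U) V))) (antipode_right (std_restr t U)))"
    unfolding flag_sum_left[symmetric] by (simp only: alg_mult_sum_left)
  also have "\<dots> = (\<Sum>U\<in>opens t. smul (counit (std_compl t U)) (antipode_right (std_restr t U)))"
    by (simp only: antipode_convolution_left alg_mult_smul_left alg_mult_top_dot_one_left)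
  also have "\<dots> = antipode_right t" by (rule sum_counit_std_compl)
  finally have "flag_sum t ?F = antipode_right t" .
  moreover have "flag_sum t ?F = (\<Sum>U\<in>opens t. alg_mult top_dot (antipode (std_compl t U)) (\<Sum>W\<in>opens (std_restr t U).
      alg_mult top_dot (bvec (std_compl (std_restr t U) W)) (antipode_right (std_restr (std_restr t U) W))))"
    unfolding flag_sum_right[symmetric] by (simp only: alg_mult_sum_right alg_mult_top_dot_assoc)
  moreover have "\<dots> = (\<Sum>U\<in>opens t. smul (counit (std_restr t U)) (antipode (std_compl t U)))"
    by (simp only: antipode_right_convolution_right alg_mult_smul_right alg_mult_top_dot_one_right)
  moreover have "\<dots> = antipode t" by (rule sum_counit_std_restr)
  ultimately show ?thesis by simp
qed

lemma bialgebra_top_delta: "bialgebra top_dot top_one (top_delta :: ftop \<Rightarrow> (ftop \<times> ftop \<Rightarrow>\<^sub>0 'k::field))"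
  by (rule bialgebraI[OF unital_assoc_top_dot coassoc_top_delta is_counit_top_delta counit_top_one
        counit_top_dot top_delta_top_dot top_delta_top_one])

lemma hopf_algebra_top_delta: "hopf_algebra top_dot top_one (top_delta :: ftop \<Rightarrow> (ftop \<times> ftop \<Rightarrow>\<^sub>0 'k::field))"
proof (rule hopf_algebraI[OF bialgebra_top_delta is_counit_top_delta, where S = antipode])
  fix t
  show "lin (\<lambda>(a, b). alg_mult top_dot (antipode a) (bvec b)) (top_delta t) = smul (counit t) (bvec top_one :: _ \<Rightarrow>\<^sub>0 'k)"
    by (simp only: lin_top_delta prod.case antipode_convolution_left)
  show "lin (\<lambda>(a, b). alg_mult top_dot (bvec a) (antipode b)) (top_delta t) = smul (counit t) (bvec top_one :: _ \<Rightarrow>\<^sub>0 'k)"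
    by (simp only: lin_top_delta prod.case antipode_right_eq_antipode[symmetric] antipode_right_convolution_right)
qed

lemma tmap_top_iota_top_delta:
  "tmap (lin (\<lambda>a. bvec (top_iota a))) (lin (\<lambda>a. bvec (top_iota a))) (top_delta t) =
     (top_delta_op (top_iota t) :: _ \<Rightarrow>\<^sub>0 'k::field)"
  unfolding tmap_def top_delta_op_def top_delta_top_iota tflip_def by (simp add: lin_top_delta lin_sum)

lemma bialgebra_top_delta_op: "bialgebra top_dot top_one (top_delta_op :: ftop \<Rightarrow> (ftop \<times> ftop \<Rightarrow>\<^sub>0 'k::field))"
  by (rule bialgebraI[OF unital_assoc_top_dot coassoc_top_delta_op is_counit_top_delta_op counit_top_one
        counit_top_dot top_delta_op_top_dot])
    (simp add: top_delta_op_def tflip_def top_delta_top_one)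

definition antipode_op :: "ftop \<Rightarrow> (ftop \<Rightarrow>\<^sub>0 'k::field)" where
  "antipode_op t = lin (\<lambda>a. bvec (top_iota a)) (antipode (top_iota t))"

lemma hopf_algebra_top_delta_op: "hopf_algebra top_dot top_one (top_delta_op :: ftop \<Rightarrow> (ftop \<times> ftop \<Rightarrow>\<^sub>0 'k::field))"
proof (rule hopf_algebraI[OF bialgebra_top_delta_op is_counit_top_delta_op, where S = antipode_op])
  let ?I = "lin (\<lambda>a. bvec (top_iota a)) :: (ftop \<Rightarrow>\<^sub>0 'k) \<Rightarrow> _"
  have I_mult: "?I (alg_mult top_dot x y) = alg_mult top_dot (?I x) (?I y)" for x y
    by (rule lin_bvec_alg_mult) (rule top_iota_top_dot)
  have I_unit: "?I (smul (counit (top_iota t)) (bvec top_one)) = smul (counit t) (bvec top_one)" for t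
    by (simp add: lin_smul counit_def)
  fix t
  have "lin (\<lambda>(a, b). alg_mult top_dot (antipode_op a) (bvec b)) (top_delta_op t)
      = ?I (\<Sum>U\<in>opens t. alg_mult top_dot (antipode (top_iota (std_restr t U))) (bvec (top_iota (std_compl t U))))"
    by (simp add: lin_top_delta_op antipode_op_def I_mult lin_sum)
  also have "\<dots> = ?I (lin (\<lambda>(a, b). alg_mult top_dot (antipode a) (bvec b)) (top_delta (top_iota t)))"
    by (simp only: top_delta_top_iota lin_sum lin_bvec prod.case)
  also have "\<dots> = ?I (smul (counit (top_iota t)) (bvec top_one))"
    by (simp only: lin_top_delta prod.case antipode_convolution_left)
  finally show "lin (\<lambda>(a, b). alg_mult top_dot (antipode_op a) (bvec b)) (top_delta_op t) = smul (counit t) (bvec top_one :: _ \<Rightarrow>\<^sub>0 'k)"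
    unfolding I_unit .
  have "lin (\<lambda>(a, b). alg_mult top_dot (bvec a) (antipode_op b)) (top_delta_op t)
      = ?I (\<Sum>U\<in>opens t. alg_mult top_dot (bvec (top_iota (std_restr t U))) (antipode (top_iota (std_compl t U))))"
    by (simp add: lin_top_delta_op antipode_op_def I_mult lin_sum)
  also have "\<dots> = ?I (lin (\<lambda>(a, b). alg_mult top_dot (bvec a) (antipode_right b)) (top_delta (top_iota t)))"
    by (simp only: top_delta_top_iota lin_sum lin_bvec prod.case antipode_right_eq_antipode)
  also have "\<dots> = ?I (smul (counit (top_iota t)) (bvec top_one))"
    by (simp only: lin_top_delta prod.case antipode_right_convolution_right)
  finally show "lin (\<lambda>(a, b). alg_mult top_dot (bvec a) (antipode_op b)) (top_delta_op t) = smul (counit t) (bvec top_one :: _ \<Rightarrow>\<^sub>0 'k)"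
    unfolding I_unit .
qed

theorem proposition6:
  shows "(hopf_algebra top_dot top_one (top_delta :: ftop \<Rightarrow> (ftop \<times> ftop \<Rightarrow>\<^sub>0 'k::field))
            \<and> graded deg top_dot top_one (top_delta :: ftop \<Rightarrow> (ftop \<times> ftop \<Rightarrow>\<^sub>0 'k)))
       \<and> (infinitesimal_bialgebra top_down top_one (top_delta :: ftop \<Rightarrow> (ftop \<times> ftop \<Rightarrow>\<^sub>0 'k))
            \<and> graded deg top_down top_one (top_delta :: ftop \<Rightarrow> (ftop \<times> ftop \<Rightarrow>\<^sub>0 'k)))
       \<and> hopf_iso top_dot top_one (top_delta :: ftop \<Rightarrow> (ftop \<times> ftop \<Rightarrow>\<^sub>0 'k))
            top_dot top_one top_delta_op (\<lambda>t. bvec (top_iota t))"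
proof (intro conjI)
  show "hopf_algebra top_dot top_one (top_delta :: ftop \<Rightarrow> (ftop \<times> ftop \<Rightarrow>\<^sub>0 'k))"
    by (rule hopf_algebra_top_delta)
  show "graded deg top_dot top_one (top_delta :: ftop \<Rightarrow> (ftop \<times> ftop \<Rightarrow>\<^sub>0 'k))"
    "graded deg top_down top_one (top_delta :: ftop \<Rightarrow> (ftop \<times> ftop \<Rightarrow>\<^sub>0 'k))"
    by (simp_all add: graded_top_delta)
  show "infinitesimal_bialgebra top_down top_one (top_delta :: ftop \<Rightarrow> (ftop \<times> ftop \<Rightarrow>\<^sub>0 'k))"
    by (rule infinitesimal_bialgebraI[OF unital_assoc_top_down counital_coalg_top_delta top_delta_top_down])
  show "hopf_iso top_dot top_one (top_delta :: ftop \<Rightarrow> (ftop \<times> ftop \<Rightarrow>\<^sub>0 'k))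
      top_dot top_one top_delta_op (\<lambda>t. bvec (top_iota t))"
    by (rule hopf_isoI[OF hopf_algebra_top_delta hopf_algebra_top_delta_op top_iota_top_iota
          top_iota_top_dot top_iota_top_one tmap_top_iota_top_delta])
qed

end
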